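(* For every integer $n\ge1$, $\phi(\xi_n)=t^n$, where $\xi_n=\sum_{a=1}^n\binom{n}{a}p_{a,0}$.
   Context: $p_{a,b}=\sum_{i\in\mathbb{Z}}x_i^ax_{-i}^b$ in commuting variables $x_i$, $i\in\mathbb{Z}$. A signed graph is a finite graph (loops and multiple edges allowed) with $\mathrm{sgn}:E\to\{+,-\}$; a coloring $\kappa:V\to\mathbb{Z}$ is proper if $\kappa(u)\ne\mathrm{sgn}(e)\kappa(v)$ for every edge $e$ with endpoints $u,v$. An orientation assigns to each half-edge (a loop has two) an arrow toward or away from the vertex, such that on a positive edge exactly one of the two arrows points toward its vertex and on a negative edge both point toward or both point away. A cycle is a closed walk in which, considering only the edges of the walk, every vertex of the walk has at least one arrow pointing into it and one pointing out of it; an orientation is acyclic if it has no cycle; a sink is a vertex all of whose incident arrows point toward it (an isolated vertex is a sink). A signed poset is an acyclic orientation $P$ of a signed graph. A proper coloring $\kappa$ preserves $P$ if for every edge $e$ and each endpoint $v$ of $e$, with $u$ the other endpoint ($u=v$ for a loop), the arrow of $P$ at the incidence of $e$ with $v$ points toward $v$ iff $\kappa(v)>\mathrm{sgn}(e)\kappa(u)$. $Y_P=\sum_\kappa\prod_v x_{\kappa(v)}$ over proper colorings preserving $P$; $\mathbb{Y}$ is the $\mathbb{Q}$-span of all $Y_P$ (it is closed under products and contains $p_{a,b}$ for $a\ge1,b\ge0$). $\phi:\mathbb{Y}\to\mathbb{Q}[t]$ is the (unique) $\mathbb{Q}$-linear map with $\phi(Y_P)=t^{\mathrm{sink}(P)}$,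 $\mathrm{sink}(P)$ the number of sinks of $P$ (its existence is established in the paper). *)

theory Defs
  imports Main "HOL-Library.Multiset" "HOL-Library.FuncSet" "HOL-Computational_Algebra.Polynomial"
begin

text \<open>Each edge e has two half-edges: half-edge 1 at vertex fst (sends P e) and half-edge 2
  at vertex snd (sends P e) (equal for a loop). spos P e is True iff e is positive.
  sarr P e = (a,b): a (resp. b) is True iff the arrow at half-edge 1 (resp. 2) points
  toward its vertex.\<close>

record sposet =
  sverts :: "nat set"
  sedges :: "nat set"
  sends :: "nat \<Rightarrow> nat \<times> nat"
  spos :: "nat \<Rightarrow> bool"
  sarr :: "nat \<Rightarrow> bool \<times> bool"

definition sgnval :: "sposet \<Rightarrow> nat \<Rightarrow> int" where
  "sgnval P e = (if spos P e then 1 else -1)"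

definition is_oriented_signed_graph :: "sposet \<Rightarrow> bool" where
  "is_oriented_signed_graph P \<longleftrightarrow>
     finite (sverts P) \<and> finite (sedges P) \<and>
     (\<forall>e\<in>sedges P. fst (sends P e) \<in> sverts P \<and> snd (sends P e) \<in> sverts P) \<and>
     (\<forall>e\<in>sedges P. (spos P e \<longleftrightarrow> fst (sarr P e) \<noteq> snd (sarr P e)))"

definition closed_walk :: "sposet \<Rightarrow> nat list \<Rightarrow> nat list \<Rightarrow> bool" where
  "closed_walk P ws es \<longleftrightarrow>
     es \<noteq> [] \<and> length ws = length es + 1 \<and> hd ws = last ws \<and>
     (\<forall>j<length es. es!j \<in> sedges P \<and>
        (sends P (es!j) = (ws!j, ws!(j+1)) \<or> sends P (es!j) = (ws!(j+1), ws!j)))"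

definition has_in_arrow :: "sposet \<Rightarrow> nat set \<Rightarrow> nat \<Rightarrow> bool" where
  "has_in_arrow P S w \<longleftrightarrow> (\<exists>e\<in>S.
      (fst (sends P e) = w \<and> fst (sarr P e)) \<or> (snd (sends P e) = w \<and> snd (sarr P e)))"

definition has_out_arrow :: "sposet \<Rightarrow> nat set \<Rightarrow> nat \<Rightarrow> bool" where
  "has_out_arrow P S w \<longleftrightarrow> (\<exists>e\<in>S.
      (fst (sends P e) = w \<and> \<not> fst (sarr P e)) \<or> (snd (sends P e) = w \<and> \<not> snd (sarr P e)))"

definition is_cycle :: "sposet \<Rightarrow> nat list \<Rightarrow> nat list \<Rightarrow> bool" where
  "is_cycle P ws es \<longleftrightarrow> closed_walk P ws es \<and>
     (\<forall>w\<in>set ws. has_in_arrow P (set es) w \<and> has_out_arrow P (set es) w)"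

definition signed_poset :: "sposet \<Rightarrow> bool" where
  "signed_poset P \<longleftrightarrow> is_oriented_signed_graph P \<and> (\<nexists>ws es. is_cycle P ws es)"

definition is_sink :: "sposet \<Rightarrow> nat \<Rightarrow> bool" where
  "is_sink P v \<longleftrightarrow> v \<in> sverts P \<and>
     (\<forall>e\<in>sedges P. (fst (sends P e) = v \<longrightarrow> fst (sarr P e)) \<and>
                    (snd (sends P e) = v \<longrightarrow> snd (sarr P e)))"

definition nsinks :: "sposet \<Rightarrow> nat" where
  "nsinks P = card {v. is_sink P v}"

definition proper_col :: "sposet \<Rightarrow> (nat \<Rightarrow> int) \<Rightarrow> bool" where
  "proper_col P \<kappa> \<longleftrightarrow> (\<forall>e\<in>sedges P.
      \<kappa> (fst (sends P e)) \<noteq> sgnval P e * \<kappa> (snd (sends P e)))"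

definition preserves :: "sposet \<Rightarrow> (nat \<Rightarrow> int) \<Rightarrow> bool" where
  "preserves P \<kappa> \<longleftrightarrow> (\<forall>e\<in>sedges P.
      (fst (sarr P e) \<longleftrightarrow> \<kappa> (fst (sends P e)) > sgnval P e * \<kappa> (snd (sends P e))) \<and>
      (snd (sarr P e) \<longleftrightarrow> \<kappa> (snd (sends P e)) > sgnval P e * \<kappa> (fst (sends P e))))"

text \<open>Formal power series in the variables x_i (i :: int) are represented by their
  coefficient functions on monomials; a monomial is a finite multiset of indices.\<close>
type_synonym fps_Z = "int multiset \<Rightarrow> rat"

definition Ycoeff :: "sposet \<Rightarrow> fps_Z" where
  "Ycoeff P m = of_nat (card {\<kappa> \<in> sverts P \<rightarrow>\<^sub>E (UNIV :: int set).
      proper_col P \<kappa> \<and> preserves P \<kappa> \<and> image_mset \<kappa> (mset_set (sverts P)) = m})"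

text \<open>p_{a,b} = sum over i of x_i^a x_{-i}^b.\<close>
definition pab :: "nat \<Rightarrow> nat \<Rightarrow> fps_Z" where
  "pab a b m = of_nat (card {i :: int. m = replicate_mset a i + replicate_mset b (- i)})"

definition xi :: "nat \<Rightarrow> fps_Z" where
  "xi n = (\<lambda>m. \<Sum>a = 1..n. of_nat (n choose a) * pab a 0 m)"

definition lincomb_Y :: "(rat \<times> sposet) list \<Rightarrow> fps_Z" where
  "lincomb_Y L = (\<lambda>m. \<Sum>(c, P) \<leftarrow> L. c * Ycoeff P m)"

definition phi_of :: "(rat \<times> sposet) list \<Rightarrow> rat poly" where
  "phi_of L = (\<Sum>(c, P) \<leftarrow> L. smult c (monom 1 (nsinks P)))"

end

theory Submission
  imports Defs
begin

text \<open>
  The map \<open>\<phi>\<close> is realised, on series of bounded degree and index range, by a linear functional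
  \<open>Phi D\<close> that pairs each monomial with a weight in \<open>\<rat>[t]\<close>; then \<open>Phi D (Y\<^sub>P)\<close> is the total
  weight of the colourings counted by \<open>Y\<^sub>P\<close>.  Only colourings whose nonzero absolute values fill
  an interval \<open>1, \<dots>, K\<close>, forming the set \<open>C\<^sub>K(P)\<close>, have nonzero weight.  In such a colouring
  the vertices coloured \<open>K\<close> are sinks and those coloured \<open>-K\<close> are sources, and removing them
  identifies these colourings with pairs of disjoint sets of sinks and sources, not both empty,
  together with a colouring in \<open>C\<^bsub>K-1\<^esub>\<close> of the rest.  As \<open>P\<close> is acyclic, its sinks and sources differ once it
  has an edge, so the signed number of such pairs is \<open>-1\<close>, and induction shows that the
  alternating count \<open>\<Sum>\<^sub>K (-1)\<^bsup>n+K\<^esup> #C\<^sub>K(P)\<close> is \<open>1\<close>.  The rest of the weight lives on colourings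
  without the value \<open>-K\<close> and adds up to \<open>t\<^bsup>sink(P)\<^esup> - 1\<close>.  Hence \<open>Phi D (Y\<^sub>P) = t\<^bsup>sink(P)\<^esup>\<close>,
  so \<open>\<phi>\<close> is well defined.  On \<open>p\<^sub>a\<^sub>,\<^sub>0\<close> the weights give \<open>(t - 1)\<^sup>a - (-1)\<^sup>a\<close>, and the
  binomial theorem yields \<open>\<phi>(\<xi>\<^sub>n) = t\<^sup>n\<close>.  That \<open>\<xi>\<^sub>n\<close> lies in the span of the \<open>Y\<^sub>P\<close> follows
  by writing \<open>x\<^sub>i\<^sup>a\<close> as an inclusion-exclusion sum over oriented paths.
\<close>

section \<open>Level colourings\<close>

definition good_coloring :: "sposet \<Rightarrow> (nat \<Rightarrow> int) \<Rightarrow> bool" where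
  "good_coloring P k \<longleftrightarrow> proper_col P k \<and> preserves P k"

definition is_source :: "sposet \<Rightarrow> nat \<Rightarrow> bool" where
  "is_source P v \<longleftrightarrow> v \<in> sverts P \<and>
     (\<forall>e\<in>sedges P. (fst (sends P e) = v \<longrightarrow> \<not> fst (sarr P e)) \<and>
                    (snd (sends P e) = v \<longrightarrow> \<not> snd (sarr P e)))"

lemma sinks_subset_verts: "{v. is_sink P v} \<subseteq> sverts P"
  by (auto simp: is_sink_def)

lemma sources_subset_verts: "{v. is_source P v} \<subseteq> sverts P"
  by (auto simp: is_source_def)

lemma signed_poset_finite_verts: "signed_poset P \<Longrightarrow> finite (sverts P)"
  by (simp add: signed_poset_def is_oriented_signed_graph_def)

lemma edge_ends_in_verts:
  "is_oriented_signed_graph P \<Longrightarrow> e \<in> sedges P \<Longrightarrow>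
     fst (sends P e) \<in> sverts P \<and> snd (sends P e) \<in> sverts P"
  by (simp add: is_oriented_signed_graph_def)

lemma sgnval_cases: "sgnval P e = 1 \<or> sgnval P e = -1"
  by (simp add: sgnval_def)

lemma good_coloring_edge:
  assumes "good_coloring P k" "e \<in> sedges P"
  shows "k (fst (sends P e)) \<noteq> sgnval P e * k (snd (sends P e))"
    "fst (sarr P e) \<longleftrightarrow> k (fst (sends P e)) > sgnval P e * k (snd (sends P e))"
    "snd (sarr P e) \<longleftrightarrow> k (snd (sends P e)) > sgnval P e * k (fst (sends P e))"
  using assms by (auto simp: good_coloring_def proper_col_def preserves_def)

definition abs_levels :: "sposet \<Rightarrow> (nat \<Rightarrow> int) \<Rightarrow> int set" where
  "abs_levels P k = abs ` k ` sverts P - {0}"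

definition level_colorings :: "nat \<Rightarrow> sposet \<Rightarrow> (nat \<Rightarrow> int) set" where
  "level_colorings K P =
     {k \<in> sverts P \<rightarrow>\<^sub>E UNIV. good_coloring P k \<and> abs_levels P k = {1..int K}}"

lemma level_colorings_abs_le:
  assumes "k \<in> level_colorings K P" "v \<in> sverts P"
  shows "\<bar>k v\<bar> \<le> int K"
proof (cases "k v = 0")
  case False
  then have "\<bar>k v\<bar> \<in> abs_levels P k" using assms(2) by (auto simp: abs_levels_def)
  then show ?thesis using assms(1) by (auto simp: level_colorings_def)
qed simp

lemma finite_level_colorings:
  assumes "finite (sverts P)"
  shows "finite (level_colorings K P)"
proof (rule finite_subset[OF _ finite_PiE[OF assms]])
  show "level_colorings K P \<subseteq> sverts P \<rightarrow>\<^sub>E {- int K..int K}"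
  proof
    fix k assume k: "k \<in> level_colorings K P"
    then have "k \<in> extensional (sverts P)" by (simp add: level_colorings_def PiE_iff)
    then show "k \<in> sverts P \<rightarrow>\<^sub>E {- int K..int K}"
      by (auto simp: PiE_iff dest!: level_colorings_abs_le[OF k])
  qed
qed auto

lemma level_colorings_empty:
  assumes "finite (sverts P)" "card (sverts P) < K"
  shows "level_colorings K P = {}"
proof (rule ccontr)
  assume "level_colorings K P \<noteq> {}"
  then obtain k where "k \<in> level_colorings K P" by blast
  then have "{1..int K} \<subseteq> (abs \<circ> k) ` sverts P"
    by (auto simp: level_colorings_def abs_levels_def image_comp)
  then have "card {1..int K} \<le> card ((abs \<circ> k) ` sverts P)"
    using assms(1) by (intro card_mono) auto
  also have "\<dots> \<le> card (sverts P)" by (rule card_image_le[OF assms(1)])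
  finally show False using assms(2) by simp
qed

lemma card_level_colorings_0:
  assumes "is_oriented_signed_graph P"
  shows "card (level_colorings 0 P) = (if sedges P = {} then 1 else 0)"
proof -
  let ?z = "restrict (\<lambda>_. 0::int) (sverts P)"
  have "abs_levels P k = {} \<longleftrightarrow> (\<forall>v\<in>sverts P. k v = 0)" for k
    by (auto simp: abs_levels_def image_subset_iff)
  moreover have "k \<in> sverts P \<rightarrow>\<^sub>E UNIV \<and> (\<forall>v\<in>sverts P. k v = 0) \<longleftrightarrow> k = ?z" for k
    by (auto simp: PiE_def extensional_def fun_eq_iff)
  ultimately have "level_colorings 0 P = {k. k = ?z \<and> good_coloring P k}"
    unfolding level_colorings_def by auto
  also have "\<dots> = (if sedges P = {} then {?z} else {})"
  proof (cases "sedges P = {}")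
    case False
    then obtain e where "e \<in> sedges P" by blast
    then have "\<not> good_coloring P ?z"
      using edge_ends_in_verts[OF assms] by (auto simp: good_coloring_def proper_col_def)
    then show ?thesis using False by auto
  qed (auto simp: good_coloring_def proper_col_def preserves_def)
  finally show ?thesis by simp
qed

lemma good_coloring_extreme_arrows:
  assumes "good_coloring P k" "e \<in> sedges P"
    and "\<bar>k (fst (sends P e))\<bar> \<le> L" "\<bar>k (snd (sends P e))\<bar> \<le> L"
  shows "k (fst (sends P e)) = L \<Longrightarrow> fst (sarr P e)"
    "k (fst (sends P e)) = - L \<Longrightarrow> \<not> fst (sarr P e)"
    "k (snd (sends P e)) = L \<Longrightarrow> snd (sarr P e)"
    "k (snd (sends P e)) = - L \<Longrightarrow> \<not> snd (sarr P e)"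
  using good_coloring_edge[OF assms(1,2)] assms(3,4) sgnval_cases[of P e] by auto

lemma level_colorings_extreme_arrows:
  assumes "is_oriented_signed_graph P" "k \<in> level_colorings K P" "e \<in> sedges P"
  shows "k (fst (sends P e)) = int K \<Longrightarrow> fst (sarr P e)"
    "k (fst (sends P e)) = - int K \<Longrightarrow> \<not> fst (sarr P e)"
    "k (snd (sends P e)) = int K \<Longrightarrow> snd (sarr P e)"
    "k (snd (sends P e)) = - int K \<Longrightarrow> \<not> snd (sarr P e)"
  using good_coloring_extreme_arrows[OF _ assms(3), of k "int K"] assms(2)
    level_colorings_abs_le[OF assms(2)] edge_ends_in_verts[OF assms(1,3)]
  by (simp_all add: level_colorings_def)

lemma level_colorings_top_sink:
  assumes "is_oriented_signed_graph P" "k \<in> level_colorings K P"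
    and "v \<in> sverts P" "k v = int K"
  shows "is_sink P v"
  using level_colorings_extreme_arrows[OF assms(1,2)] assms(3,4) by (auto simp: is_sink_def)

lemma level_colorings_bottom_source:
  assumes "is_oriented_signed_graph P" "k \<in> level_colorings K P"
    and "v \<in> sverts P" "k v = - int K"
  shows "is_source P v"
  using level_colorings_extreme_arrows[OF assms(1,2)] assms(3,4) by (auto simp: is_source_def)

section \<open>Peeling off the top level\<close>

definition delete_verts :: "sposet \<Rightarrow> nat set \<Rightarrow> sposet" where
  "delete_verts P S = P\<lparr>sverts := sverts P - S,
      sedges := {e \<in> sedges P. fst (sends P e) \<notin> S \<and> snd (sends P e) \<notin> S}\<rparr>"

definition sink_source_pairs :: "sposet \<Rightarrow> (nat set \<times> nat set) set" where
  "sink_source_pairs P = {AB. fst AB \<subseteq> {v. is_sink P v} \<and> snd AB \<subseteq> {v. is_source P v}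
       \<and> fst AB \<inter> snd AB = {} \<and> fst AB \<union> snd AB \<noteq> {}}"

definition extend_coloring :: "nat set \<Rightarrow> nat set \<Rightarrow> int \<Rightarrow> (nat \<Rightarrow> int) \<Rightarrow> nat \<Rightarrow> int" where
  "extend_coloring A B L k = (\<lambda>v. if v \<in> A then L else if v \<in> B then - L else k v)"

lemma delete_verts_simps [simp]:
  "sverts (delete_verts P S) = sverts P - S"
  "sedges (delete_verts P S) = {e \<in> sedges P. fst (sends P e) \<notin> S \<and> snd (sends P e) \<notin> S}"
  "sends (delete_verts P S) = sends P" "spos (delete_verts P S) = spos P"
  "sarr (delete_verts P S) = sarr P"
  by (simp_all add: delete_verts_def)

lemma sgnval_delete_verts [simp]: "sgnval (delete_verts P S) = sgnval P"
  by (simp add: sgnval_def fun_eq_iff)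

lemma signed_poset_delete_verts:
  assumes "signed_poset P"
  shows "signed_poset (delete_verts P S)"
proof -
  have "is_cycle P ws es" if "is_cycle (delete_verts P S) ws es" for ws es
    using that by (auto simp: is_cycle_def closed_walk_def has_in_arrow_def has_out_arrow_def)
  then show ?thesis
    using assms by (auto simp: signed_poset_def is_oriented_signed_graph_def)
qed

lemma sink_source_pairs_card:
  assumes "AB \<in> sink_source_pairs P" "finite (sverts P)"
  shows "card (sverts P) = card (sverts P - (fst AB \<union> snd AB)) + card (fst AB) + card (snd AB)"
    "card (sverts P - (fst AB \<union> snd AB)) < card (sverts P)"
proof -
  have sub: "fst AB \<subseteq> sverts P" "snd AB \<subseteq> sverts P" and disj: "fst AB \<inter> snd AB = {}"
    and ne: "fst AB \<union> snd AB \<noteq> {}"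
    using assms(1) sinks_subset_verts[of P] sources_subset_verts[of P]
    by (auto simp: sink_source_pairs_def)
  have fin: "finite (fst AB)" "finite (snd AB)" using sub assms(2) by (auto intro: finite_subset)
  have "card (sverts P) = card (sverts P - (fst AB \<union> snd AB)) + card (fst AB \<union> snd AB)"
    using card_Diff_subset[of "fst AB \<union> snd AB" "sverts P"] card_mono[OF assms(2), of "fst AB \<union> snd AB"]
      sub fin by simp
  moreover have "card (fst AB \<union> snd AB) = card (fst AB) + card (snd AB)"
    by (rule card_Un_disjoint[OF fin disj])
  moreover have "card (fst AB \<union> snd AB) > 0" using ne fin by auto
  ultimately show "card (sverts P) = card (sverts P - (fst AB \<union> snd AB)) + card (fst AB) + card (snd AB)"
    "card (sverts P - (fst AB \<union> snd AB)) < card (sverts P)" by simp_all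
qed

lemma finite_sink_source_pairs:
  assumes "finite (sverts P)"
  shows "finite (sink_source_pairs P)"
proof (rule finite_subset[of _ "Pow (sverts P) \<times> Pow (sverts P)"])
  show "sink_source_pairs P \<subseteq> Pow (sverts P) \<times> Pow (sverts P)"
    using sinks_subset_verts[of P] sources_subset_verts[of P]
    by (auto simp: sink_source_pairs_def mem_Times_iff)
qed (use assms in auto)

lemma sgnval_eq_arrows:
  assumes "is_oriented_signed_graph P" "e \<in> sedges P"
  shows "sgnval P e = (if fst (sarr P e) \<noteq> snd (sarr P e) then 1 else -1)"
  using assms by (simp add: sgnval_def is_oriented_signed_graph_def)

lemma edge_condition_extreme_ends:
  fixes x y s L :: int
  assumes s: "s = (if a1 \<noteq> a2 then 1 else -1)" and "0 < L"
    and "x = L \<and> a1 \<or> x = - L \<and> \<not> a1 \<or> \<bar>x\<bar> < L"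
    and "y = L \<and> a2 \<or> y = - L \<and> \<not> a2 \<or> \<bar>y\<bar> < L"
    and "\<bar>x\<bar> < L \<Longrightarrow> \<bar>y\<bar> < L \<Longrightarrow> x \<noteq> s * y \<and> (a1 \<longleftrightarrow> s * y < x) \<and> (a2 \<longleftrightarrow> s * x < y)"
  shows "x \<noteq> s * y \<and> (a1 \<longleftrightarrow> s * y < x) \<and> (a2 \<longleftrightarrow> s * x < y)"
proof (cases "a1 \<noteq> a2")
  case True
  then have "s = 1" using s by simp
  then show ?thesis using True assms(2-5) by (auto simp: abs_less_iff)
next
  case False
  then have "s = -1" using s by simp
  then show ?thesis using False assms(2-5) by (auto simp: abs_less_iff)
qed

lemma good_coloring_extend_coloring:
  assumes oriented: "is_oriented_signed_graph P" and AB: "(A, B) \<in> sink_source_pairs P"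
    and k: "good_coloring (delete_verts P (A \<union> B)) k" and "0 < L"
    and small: "\<And>v. v \<in> sverts P - (A \<union> B) \<Longrightarrow> \<bar>k v\<bar> < L"
  shows "good_coloring P (extend_coloring A B L k)"
  unfolding good_coloring_def proper_col_def preserves_def
proof (intro conjI ballI)
  fix e assume e: "e \<in> sedges P"
  let ?k = "extend_coloring A B L k" and ?u = "fst (sends P e)" and ?w = "snd (sends P e)"
  have disj: "A \<inter> B = {}" and A: "\<And>v. v \<in> A \<Longrightarrow> is_sink P v" and B: "\<And>v. v \<in> B \<Longrightarrow> is_source P v"
    using AB by (auto simp: sink_source_pairs_def)
  have ends: "?u \<in> sverts P" "?w \<in> sverts P" using edge_ends_in_verts[OF oriented e] by auto
  have "?u \<in> A \<Longrightarrow> fst (sarr P e)" "?w \<in> A \<Longrightarrow> snd (sarr P e)"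
    using A e unfolding is_sink_def by blast+
  moreover have "?u \<in> B \<Longrightarrow> \<not> fst (sarr P e)" "?w \<in> B \<Longrightarrow> \<not> snd (sarr P e)"
    using B e unfolding is_source_def by blast+
  ultimately have
    "?k ?u = L \<and> fst (sarr P e) \<or> ?k ?u = - L \<and> \<not> fst (sarr P e) \<or> \<bar>?k ?u\<bar> < L"
    "?k ?w = L \<and> snd (sarr P e) \<or> ?k ?w = - L \<and> \<not> snd (sarr P e) \<or> \<bar>?k ?w\<bar> < L"
    using disj small ends unfolding extend_coloring_def by auto
  moreover have "?k ?u \<noteq> sgnval P e * ?k ?w \<and> (fst (sarr P e) \<longleftrightarrow> sgnval P e * ?k ?w < ?k ?u)
      \<and> (snd (sarr P e) \<longleftrightarrow> sgnval P e * ?k ?u < ?k ?w)"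
    if "\<bar>?k ?u\<bar> < L" "\<bar>?k ?w\<bar> < L"
  proof -
    have "?u \<notin> A \<union> B" using that(1) \<open>0 < L\<close> by (auto simp: extend_coloring_def split: if_splits)
    moreover have "?w \<notin> A \<union> B" using that(2) \<open>0 < L\<close> by (auto simp: extend_coloring_def split: if_splits)
    moreover have "e \<in> sedges (delete_verts P (A \<union> B))" using e calculation by simp
    ultimately show ?thesis using good_coloring_edge[OF k] by (simp add: extend_coloring_def)
  qed
  ultimately have "?k ?u \<noteq> sgnval P e * ?k ?w \<and> (fst (sarr P e) \<longleftrightarrow> sgnval P e * ?k ?w < ?k ?u)
      \<and> (snd (sarr P e) \<longleftrightarrow> sgnval P e * ?k ?u < ?k ?w)"
    by (rule edge_condition_extreme_ends[OF sgnval_eq_arrows[OF oriented e] \<open>0 < L\<close>])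
  then show "?k ?u \<noteq> sgnval P e * ?k ?w" "fst (sarr P e) = (?k ?u > sgnval P e * ?k ?w)"
    "snd (sarr P e) = (?k ?w > sgnval P e * ?k ?u)" by auto
qed

lemma sink_source_pairs_subset_verts:
  assumes "AB \<in> sink_source_pairs P"
  shows "fst AB \<union> snd AB \<subseteq> sverts P"
  using assms sinks_subset_verts[of P] sources_subset_verts[of P]
  by (auto simp: sink_source_pairs_def)

lemma abs_levels_extend_coloring:
  assumes AB: "(A, B) \<in> sink_source_pairs P" and "0 < L"
  shows "abs_levels P (extend_coloring A B L k) = insert L (abs_levels (delete_verts P (A \<union> B)) k)"
proof -
  let ?S = "A \<union> B" and ?k = "extend_coloring A B L k"
  have V: "sverts P = ?S \<union> (sverts P - ?S)" using sink_source_pairs_subset_verts[OF AB] by auto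
  have "abs ` ?k ` ?S = (\<lambda>_. L) ` ?S"
    unfolding image_image using \<open>0 < L\<close> by (intro image_cong) (auto simp: extend_coloring_def)
  also have "\<dots> = {L}" using AB by (auto simp: sink_source_pairs_def)
  finally have top: "abs ` ?k ` ?S = {L}" .
  have rest: "abs ` ?k ` (sverts P - ?S) = abs ` k ` (sverts P - ?S)"
    by (auto simp: extend_coloring_def image_iff)
  have "abs_levels P ?k = (abs ` ?k ` ?S \<union> abs ` ?k ` (sverts P - ?S)) - {0}"
    unfolding abs_levels_def by (subst V) (simp only: image_Un)
  then show ?thesis
    unfolding top rest abs_levels_def using \<open>0 < L\<close> by auto
qed

lemma extend_coloring_in_level_colorings:
  assumes oriented: "is_oriented_signed_graph P" and AB: "(A, B) \<in> sink_source_pairs P"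
    and k: "k \<in> level_colorings K (delete_verts P (A \<union> B))"
  shows "extend_coloring A B (int (Suc K)) k \<in> level_colorings (Suc K) P"
  unfolding level_colorings_def mem_Collect_eq
proof (intro conjI)
  show "extend_coloring A B (int (Suc K)) k \<in> sverts P \<rightarrow>\<^sub>E UNIV"
    using k sink_source_pairs_subset_verts[OF AB]
    by (auto simp: level_colorings_def extend_coloring_def PiE_def extensional_def)
  show "good_coloring P (extend_coloring A B (int (Suc K)) k)"
  proof (rule good_coloring_extend_coloring[OF oriented AB])
    show "good_coloring (delete_verts P (A \<union> B)) k" using k by (simp add: level_colorings_def)
    show "\<bar>k v\<bar> < int (Suc K)" if "v \<in> sverts P - (A \<union> B)" for v
      using level_colorings_abs_le[OF k] that by force
  qed simp
  show "abs_levels P (extend_coloring A B (int (Suc K)) k) = {1..int (Suc K)}"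
    using k by (auto simp: abs_levels_extend_coloring[OF AB] level_colorings_def)
qed

lemma extend_coloring_extreme_sets:
  assumes AB: "(A, B) \<in> sink_source_pairs P" and k: "k \<in> level_colorings K (delete_verts P (A \<union> B))"
  shows "{v \<in> sverts P. extend_coloring A B (int (Suc K)) k v = int (Suc K)} = A"
    "{v \<in> sverts P. extend_coloring A B (int (Suc K)) k v = - int (Suc K)} = B"
proof -
  have "A \<subseteq> sverts P" "B \<subseteq> sverts P" "A \<inter> B = {}"
    using AB sink_source_pairs_subset_verts[OF AB] by (auto simp: sink_source_pairs_def)
  moreover have "v \<in> sverts P \<Longrightarrow> v \<notin> A \<Longrightarrow> v \<notin> B \<Longrightarrow> \<bar>k v\<bar> \<le> int K" for v
    using level_colorings_abs_le[OF k, of v] by simp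
  ultimately show "{v \<in> sverts P. extend_coloring A B (int (Suc K)) k v = int (Suc K)} = A"
    "{v \<in> sverts P. extend_coloring A B (int (Suc K)) k v = - int (Suc K)} = B"
    by (force simp: extend_coloring_def)+
qed

lemma good_coloring_restrict_delete_verts:
  assumes "is_oriented_signed_graph P" "good_coloring P k"
  shows "good_coloring (delete_verts P S) (restrict k (sverts P - S))"
  unfolding good_coloring_def proper_col_def preserves_def
proof (intro ballI conjI)
  fix e assume "e \<in> sedges (delete_verts P S)"
  then have e: "e \<in> sedges P" "fst (sends P e) \<in> sverts P - S" "snd (sends P e) \<in> sverts P - S"
    using edge_ends_in_verts[OF assms(1)] by auto
  then show "restrict k (sverts P - S) (fst (sends (delete_verts P S) e)) \<noteq>
      sgnval (delete_verts P S) e * restrict k (sverts P - S) (snd (sends (delete_verts P S) e))"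
    "fst (sarr (delete_verts P S) e) = (sgnval (delete_verts P S) e * restrict k (sverts P - S) (snd (sends (delete_verts P S) e))
      < restrict k (sverts P - S) (fst (sends (delete_verts P S) e)))"
    "snd (sarr (delete_verts P S) e) = (sgnval (delete_verts P S) e * restrict k (sverts P - S) (fst (sends (delete_verts P S) e))
      < restrict k (sverts P - S) (snd (sends (delete_verts P S) e)))"
    using good_coloring_edge[OF assms(2) e(1)] by simp_all
qed

lemma level_colorings_restrict:
  assumes oriented: "is_oriented_signed_graph P" and k: "k \<in> level_colorings (Suc K) P"
  defines "S \<equiv> {v \<in> sverts P. \<bar>k v\<bar> = int (Suc K)}"
  shows "restrict k (sverts P - S) \<in> level_colorings K (delete_verts P S)"
  unfolding level_colorings_def mem_Collect_eq
proof (intro conjI)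
  let ?r = "restrict k (sverts P - S)"
  have kg: "good_coloring P k" and kl: "abs_levels P k = {1..int (Suc K)}"
    using k by (auto simp: level_colorings_def)
  show "?r \<in> sverts (delete_verts P S) \<rightarrow>\<^sub>E UNIV" by simp
  show "good_coloring (delete_verts P S) ?r"
    by (rule good_coloring_restrict_delete_verts[OF oriented kg])
  have "abs ` ?r ` (sverts P - S) = abs ` k ` (sverts P - S)" by simp
  also have "\<dots> = abs ` k ` sverts P - {int (Suc K)}" unfolding S_def by (auto simp: image_image)
  finally have "abs_levels (delete_verts P S) ?r = abs ` k ` sverts P - {int (Suc K)} - {0}"
    by (simp only: abs_levels_def delete_verts_simps)
  also have "\<dots> = abs_levels P k - {int (Suc K)}"
    unfolding abs_levels_def by (metis Diff_insert Diff_insert2)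
  also have "\<dots> = {1..int K}"
    unfolding kl by auto
  finally show "abs_levels (delete_verts P S) ?r = {1..int K}" .
qed

lemma level_colorings_Suc_peel:
  assumes oriented: "is_oriented_signed_graph P" and k: "k \<in> level_colorings (Suc K) P"
  defines "A \<equiv> {v \<in> sverts P. k v = int (Suc K)}" and "B \<equiv> {v \<in> sverts P. k v = - int (Suc K)}"
  shows "(A, B) \<in> sink_source_pairs P"
    "restrict k (sverts P - (A \<union> B)) \<in> level_colorings K (delete_verts P (A \<union> B))"
    "k = extend_coloring A B (int (Suc K)) (restrict k (sverts P - (A \<union> B)))"
proof -
  have S: "A \<union> B = {v \<in> sverts P. \<bar>k v\<bar> = int (Suc K)}"
    unfolding A_def B_def by auto
  have "int (Suc K) \<in> abs_levels P k" using k by (simp add: level_colorings_def)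
  then have "A \<union> B \<noteq> {}" unfolding S by (auto simp: abs_levels_def)
  then show "(A, B) \<in> sink_source_pairs P"
    using level_colorings_top_sink[OF oriented k] level_colorings_bottom_source[OF oriented k]
    by (auto simp: sink_source_pairs_def A_def B_def)
  show "restrict k (sverts P - (A \<union> B)) \<in> level_colorings K (delete_verts P (A \<union> B))"
    unfolding S by (rule level_colorings_restrict[OF oriented k])
  show "k = extend_coloring A B (int (Suc K)) (restrict k (sverts P - (A \<union> B)))"
    using k by (auto simp: fun_eq_iff extend_coloring_def A_def B_def level_colorings_def PiE_def extensional_def)
qed

lemma extend_coloring_inject:
  assumes AB: "(A, B) \<in> sink_source_pairs P" "k \<in> level_colorings K (delete_verts P (A \<union> B))"
    and AB': "(A', B') \<in> sink_source_pairs P" "k' \<in> level_colorings K (delete_verts P (A' \<union> B'))"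
    and eq: "extend_coloring A B (int (Suc K)) k = extend_coloring A' B' (int (Suc K)) k'"
  shows "A = A' \<and> B = B' \<and> k = k'"
proof -
  have "A = A'" "B = B'"
    using extend_coloring_extreme_sets[OF AB] extend_coloring_extreme_sets[OF AB'] eq by metis+
  have ext: "k \<in> extensional (sverts P - (A \<union> B))" "k' \<in> extensional (sverts P - (A \<union> B))"
    using AB(2) AB'(2) \<open>A = A'\<close> \<open>B = B'\<close> by (auto simp: level_colorings_def PiE_def)
  have "k v = k' v" for v
  proof (cases "v \<in> A \<union> B")
    case False
    then show ?thesis
      using fun_cong[OF eq, of v] \<open>A = A'\<close> \<open>B = B'\<close> by (simp add: extend_coloring_def)
  qed (use ext in \<open>simp add: extensional_def\<close>)
  then show ?thesis using \<open>A = A'\<close> \<open>B = B'\<close> by blast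
qed

lemma bij_betw_extend_coloring:
  assumes oriented: "is_oriented_signed_graph P"
  shows "bij_betw (\<lambda>(AB, k). extend_coloring (fst AB) (snd AB) (int (Suc K)) k)
    (SIGMA AB:sink_source_pairs P. level_colorings K (delete_verts P (fst AB \<union> snd AB)))
    (level_colorings (Suc K) P)"
proof (rule bij_betw_imageI)
  show "inj_on (\<lambda>(AB, k). extend_coloring (fst AB) (snd AB) (int (Suc K)) k)
    (SIGMA AB:sink_source_pairs P. level_colorings K (delete_verts P (fst AB \<union> snd AB)))"
    by (auto simp: inj_on_def dest: extend_coloring_inject)
  show "(\<lambda>(AB, k). extend_coloring (fst AB) (snd AB) (int (Suc K)) k) `
    (SIGMA AB:sink_source_pairs P. level_colorings K (delete_verts P (fst AB \<union> snd AB)))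
    = level_colorings (Suc K) P"
  proof
    show "level_colorings (Suc K) P \<subseteq> (\<lambda>(AB, k). extend_coloring (fst AB) (snd AB) (int (Suc K)) k) `
      (SIGMA AB:sink_source_pairs P. level_colorings K (delete_verts P (fst AB \<union> snd AB)))"
      using level_colorings_Suc_peel[OF oriented] by (force simp: image_iff)
  qed (use extend_coloring_in_level_colorings[OF oriented] in auto)
qed

lemma sum_level_colorings_Suc:
  assumes oriented: "is_oriented_signed_graph P"
  shows "(\<Sum>k\<in>level_colorings (Suc K) P. f k) =
    (\<Sum>AB\<in>sink_source_pairs P. \<Sum>k\<in>level_colorings K (delete_verts P (fst AB \<union> snd AB)).
       f (extend_coloring (fst AB) (snd AB) (int (Suc K)) k))"
proof -
  have fin: "finite (sverts P)" using oriented by (simp add: is_oriented_signed_graph_def)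
  show ?thesis
    unfolding sum.reindex_bij_betw[OF bij_betw_extend_coloring[OF oriented], symmetric]
    using finite_sink_source_pairs[OF fin] finite_level_colorings fin
    by (subst sum.Sigma) (auto simp: split_beta)
qed

section \<open>Signed counts\<close>

lemma sum_power_card_Pow:
  fixes c :: "'a::comm_ring_1"
  assumes "finite S"
  shows "(\<Sum>T\<in>Pow S. c ^ card T) = (1 + c) ^ card S"
  using assms
proof (induction S rule: finite_induct)
  case (insert a A)
  have inj: "inj_on (insert a) (Pow A)" using insert by (auto simp: inj_on_def)
  have card: "T \<in> Pow A \<Longrightarrow> card (insert a T) = Suc (card T)" for T
    using insert by (subst card_insert_disjoint) (auto intro: finite_subset)
  have "(\<Sum>T\<in>Pow (insert a A). c ^ card T) =
      (\<Sum>T\<in>Pow A. c ^ card T) + (\<Sum>T\<in>insert a ` Pow A. c ^ card T)"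
    unfolding Pow_insert using insert by (intro sum.union_disjoint) auto
  also have "(\<Sum>T\<in>insert a ` Pow A. c ^ card T) = c * (\<Sum>T\<in>Pow A. c ^ card T)"
    by (simp add: sum.reindex[OF inj] card sum_distrib_left)
  finally show ?case using insert by (simp add: algebra_simps)
qed simp

definition disjoint_pairs :: "'a set \<Rightarrow> 'a set \<Rightarrow> ('a set \<times> 'a set) set" where
  "disjoint_pairs X Y = {AB. fst AB \<subseteq> X \<and> snd AB \<subseteq> Y \<and> fst AB \<inter> snd AB = {}}"

lemma sum_disjoint_pairs_first:
  assumes "finite X" "finite Y"
  shows "(\<Sum>AB\<in>disjoint_pairs X Y. (-1::int) ^ (card (fst AB) + card (snd AB))) =
         (\<Sum>A\<in>Pow X. (-1) ^ card A * 0 ^ card (Y - A))"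
proof -
  have "disjoint_pairs X Y = Sigma (Pow X) (\<lambda>A. Pow (Y - A))"
    by (auto simp: disjoint_pairs_def)
  then have "(\<Sum>AB\<in>disjoint_pairs X Y. (-1::int) ^ (card (fst AB) + card (snd AB))) =
        (\<Sum>A\<in>Pow X. (-1) ^ card A * (\<Sum>B\<in>Pow (Y - A). (-1) ^ card B))"
    using assms by (simp add: sum.Sigma split_beta power_add sum_distrib_left)
  then show ?thesis
    using assms by (simp add: sum_power_card_Pow)
qed

lemma disjoint_pairs_swap: "disjoint_pairs X Y = (\<lambda>(B, A). (A, B)) ` disjoint_pairs Y X"
  by (auto simp: disjoint_pairs_def image_iff)

lemma sum_disjoint_pairs_second:
  assumes "finite X" "finite Y"
  shows "(\<Sum>AB\<in>disjoint_pairs X Y. (-1::int) ^ (card (fst AB) + card (snd AB))) =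
         (\<Sum>B\<in>Pow Y. (-1) ^ card B * 0 ^ card (X - B))"
proof -
  have "(\<Sum>AB\<in>disjoint_pairs X Y. (-1::int) ^ (card (fst AB) + card (snd AB))) =
        (\<Sum>BA\<in>disjoint_pairs Y X. (-1) ^ (card (fst BA) + card (snd BA)))"
    unfolding disjoint_pairs_swap[of X Y] by (subst sum.reindex) (auto simp: inj_on_def split_beta add.commute)
  then show ?thesis using sum_disjoint_pairs_first[OF assms(2,1)] by simp
qed

text \<open>For \<open>X = Y\<close> only the pair \<open>(X, {})\<close> survives the cancellation.\<close>

lemma sum_disjoint_pairs:
  assumes "finite X" "finite Y"
  shows "(\<Sum>AB\<in>disjoint_pairs X Y. (-1::int) ^ (card (fst AB) + card (snd AB))) =
         (if X = Y then (-1) ^ card X else 0)"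
proof -
  consider "\<not> Y \<subseteq> X" | "\<not> X \<subseteq> Y" | "X = Y" by blast
  then show ?thesis
  proof cases
    case 1
    then have "card (Y - A) \<noteq> 0" if "A \<subseteq> X" for A
      using that assms by auto
    then show ?thesis
      using 1 unfolding sum_disjoint_pairs_first[OF assms] by (auto intro!: sum.neutral)
  next
    case 2
    then have "card (X - B) \<noteq> 0" if "B \<subseteq> Y" for B
      using that assms by auto
    then show ?thesis
      using 2 unfolding sum_disjoint_pairs_second[OF assms] by (auto intro!: sum.neutral)
  next
    case 3
    have "card (X - A) = 0 \<longleftrightarrow> A = X" if "A \<subseteq> X" for A
      using that assms by (auto dest: finite_subset)
    then have "(\<Sum>A\<in>Pow X. (-1::int) ^ card A * 0 ^ card (X - A)) =
        (\<Sum>A\<in>Pow X. if A = X then (-1) ^ card A else 0)"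
      by (intro sum.cong) (auto simp: power_0_left)
    then show ?thesis
      using 3 assms unfolding sum_disjoint_pairs_first[OF assms] by (simp add: sum.delta')
  qed
qed

section \<open>Closed walks and acyclicity\<close>

lemma nth_take_Suc_Cons_drop:
  assumes "j < length xs" "i < length xs + 2"
  shows "(take (Suc j) xs @ y # drop j xs) ! i =
    (if i \<le> j then xs ! i else if i = Suc j then y else xs ! (i - 2))"
proof -
  consider "i \<le> j" | "i = Suc j" | "i \<ge> Suc (Suc j)" by linarith
  then show ?thesis
  proof cases
    case 3
    then have "i - Suc j = Suc (i - Suc (Suc j))" by simp
    then show ?thesis using assms 3 by (simp add: nth_append)
  qed (use assms in \<open>simp_all add: nth_append\<close>)
qed

lemma nth_take_Cons_Cons_drop:
  assumes "j < length xs" "i < length xs + 2"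
  shows "(take j xs @ y # y # drop j xs) ! i =
    (if i < j then xs ! i else if i = j \<or> i = Suc j then y else xs ! (i - 2))"
proof -
  consider "i < j" | "i = j" | "i = Suc j" | "i \<ge> Suc (Suc j)" by linarith
  then show ?thesis
  proof cases
    case 4
    then have "i - j = Suc (Suc (i - Suc (Suc j)))" by simp
    then show ?thesis using assms 4 by (simp add: nth_append)
  qed (use assms in \<open>simp_all add: nth_append\<close>)
qed

lemma closed_walk_detour:
  assumes cw: "closed_walk P ws es" and j: "j < length es" and e: "e \<in> sedges P"
    and ends: "sends P e = (ws ! j, w') \<or> sends P e = (w', ws ! j)"
  shows "closed_walk P (take (Suc j) ws @ w' # drop j ws) (take j es @ e # e # drop j es)"
proof -
  let ?ws = "take (Suc j) ws @ w' # drop j ws" and ?es = "take j es @ e # e # drop j es"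
  have len: "length ws = length es + 1" and hd_last: "hd ws = last ws"
    and ed: "\<And>i. i < length es \<Longrightarrow> es ! i \<in> sedges P \<and>
        (sends P (es ! i) = (ws ! i, ws ! (i + 1)) \<or> sends P (es ! i) = (ws ! (i + 1), ws ! i))"
    using cw by (auto simp: closed_walk_def)
  have jw: "j < length ws" using j len by simp
  have "?es ! i \<in> sedges P \<and>
        (sends P (?es ! i) = (?ws ! i, ?ws ! (i + 1)) \<or> sends P (?es ! i) = (?ws ! (i + 1), ?ws ! i))"
    if i: "i < length ?es" for i
  proof -
    have "i < length es + 2" "i < length ws + 2" "i + 1 < length ws + 2" using i j len by auto
    note nth = nth_take_Cons_Cons_drop[OF j this(1)] nth_take_Suc_Cons_drop[OF jw this(2)]
      nth_take_Suc_Cons_drop[OF jw this(3)]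
    consider "i < j" | "i = j \<or> i = Suc j" | "i \<ge> Suc (Suc j)" by linarith
    then show ?thesis
    proof cases
      case 3
      then have "i - 2 < length es" "i - 2 + 1 = i + 1 - 2" using i j by auto
      then show ?thesis using 3 ed[of "i - 2"] nth by auto
    qed (use e ends ed[of i] j nth in auto)
  qed
  moreover have "hd ?ws = hd ws" "last ?ws = last ws" using jw by (cases ws; simp)+
  ultimately show ?thesis
    unfolding closed_walk_def using len hd_last jw j by auto
qed

lemma closed_walk_vertex_index:
  assumes cw: "closed_walk P ws es" and w: "w \<in> set ws"
  shows "\<exists>j<length es. ws ! j = w"
proof -
  have ne: "es \<noteq> []" and len: "length ws = length es + 1" and hl: "hd ws = last ws"
    using cw by (auto simp: closed_walk_def)
  obtain i where i: "i < length ws" "ws ! i = w" using w by (auto simp: in_set_conv_nth)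
  show ?thesis
  proof (cases "i < length es")
    case True then show ?thesis using i by auto
  next
    case False
    then have "i = length ws - 1" using i len by simp
    have wsne: "ws \<noteq> []" using len by auto
    then have "w = last ws" using i \<open>i = length ws - 1\<close> by (simp add: last_conv_nth)
    also have "\<dots> = ws ! 0" using hl wsne by (simp add: hd_conv_nth)
    finally show ?thesis using ne by (intro exI[of _ 0]) auto
  qed
qed

lemma closed_walk_edges_subset: "closed_walk P ws es \<Longrightarrow> set es \<subseteq> sedges P"
  by (auto simp: closed_walk_def in_set_conv_nth)

lemma closed_walk_vertex_edge:
  assumes cw: "closed_walk P ws es" and w: "w \<in> set ws"
  shows "\<exists>e\<in>set es. fst (sends P e) = w \<or> snd (sends P e) = w"
proof -
  obtain j where j: "j < length es" "ws ! j = w" using closed_walk_vertex_index[OF cw w] by blast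
  then have "sends P (es ! j) = (ws ! j, ws ! (j + 1)) \<or> sends P (es ! j) = (ws ! (j + 1), ws ! j)"
    using cw by (auto simp: closed_walk_def)
  then show ?thesis using j by (intro bexI[of _ "es ! j"]) auto
qed

lemma closed_walk_edge_ends:
  assumes "closed_walk P ws es" "e \<in> set es"
  shows "fst (sends P e) \<in> set ws \<and> snd (sends P e) \<in> set ws"
proof -
  obtain i where i: "i < length es" "es ! i = e" using assms(2) by (auto simp: in_set_conv_nth)
  have "length ws = length es + 1" using assms(1) by (simp add: closed_walk_def)
  then have "ws ! i \<in> set ws" "ws ! (i + 1) \<in> set ws" using i by auto
  moreover have "sends P e = (ws ! i, ws ! (i + 1)) \<or> sends P e = (ws ! (i + 1), ws ! i)"
    using assms(1) i by (auto simp: closed_walk_def)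
  ultimately show ?thesis by auto
qed

text \<open>A closed walk using the largest number of distinct edges already uses every edge at
  each of its vertices, since otherwise a detour along that edge and back would use more.\<close>

lemma closed_walk_saturated:
  assumes "finite (sedges P)" "e0 \<in> sedges P"
  obtains ws es where "closed_walk P ws es"
    and "\<And>e w. e \<in> sedges P \<Longrightarrow> w \<in> set ws \<Longrightarrow> fst (sends P e) = w \<or> snd (sends P e) = w \<Longrightarrow> e \<in> set es"
proof -
  let ?u = "fst (sends P e0)" and ?v = "snd (sends P e0)"
  have "closed_walk P [?u, ?v, ?u] [e0, e0]"
    unfolding closed_walk_def using assms(2) by (auto simp: less_Suc_eq)
  moreover have "card (set (snd y)) < card (sedges P) + 1" if "closed_walk P (fst y) (snd y)" for y
    using closed_walk_edges_subset[OF that] card_mono[OF assms(1)] by (simp add: less_Suc_eq_le)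
  ultimately obtain m where m: "closed_walk P (fst m) (snd m)"
    and max: "\<And>y. closed_walk P (fst y) (snd y) \<Longrightarrow> card (set (snd y)) \<le> card (set (snd m))"
    using ex_has_greatest_nat[of "\<lambda>y. closed_walk P (fst y) (snd y)" "([?u, ?v, ?u], [e0, e0])"
        "\<lambda>y. card (set (snd y))" "card (sedges P) + 1"] by auto
  obtain ws es where m_eq: "m = (ws, es)" by (cases m)
  have cw: "closed_walk P ws es" using m by (simp add: m_eq)
  have "e \<in> set es" if e: "e \<in> sedges P" and w: "w \<in> set ws"
    and ew: "fst (sends P e) = w \<or> snd (sends P e) = w" for e w
  proof (rule ccontr)
    assume "e \<notin> set es"
    obtain j where j: "j < length es" "ws ! j = w" using closed_walk_vertex_index[OF cw w] by blast
    obtain w' where "sends P e = (ws ! j, w') \<or> sends P e = (w', ws ! j)"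
      using ew j(2) by (metis prod.collapse)
    from closed_walk_detour[OF cw j(1) e this]
    have "card (set (take j es @ e # e # drop j es)) \<le> card (set es)"
      using max[of "(_, take j es @ e # e # drop j es)"] by (auto simp: m_eq)
    moreover have "set (take j es @ e # e # drop j es) = insert e (set es)"
      by (metis append_take_drop_id insert_absorb2 list.simps(15) set_append Un_insert_right)
    ultimately show False using \<open>e \<notin> set es\<close> by simp
  qed
  then show ?thesis using that cw by blast
qed

text \<open>In a signed poset with at least one edge the sinks and the sources differ: otherwise
  every vertex met by an edge would have arrows both in and out, and a saturated closed walk
  would be a cycle.\<close>

lemma signed_poset_sinks_ne_sources:
  assumes sp: "signed_poset P" and "sedges P \<noteq> {}"
  shows "{v. is_sink P v} \<noteq> {v. is_source P v}"
proof
  assume sinks_eq: "{v. is_sink P v} = {v. is_source P v}"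
  have oriented: "is_oriented_signed_graph P" and acyclic: "\<And>ws es. \<not> is_cycle P ws es"
    using sp by (auto simp: signed_poset_def)
  have in_out: "has_in_arrow P (sedges P) w \<and> has_out_arrow P (sedges P) w"
    if e: "e \<in> sedges P" and ew: "fst (sends P e) = w \<or> snd (sends P e) = w" for e w
  proof -
    have "w \<in> sverts P" using edge_ends_in_verts[OF oriented e] ew by auto
    moreover have "has_in_arrow P (sedges P) w \<or> has_out_arrow P (sedges P) w"
      using e ew unfolding has_in_arrow_def has_out_arrow_def by blast
    moreover have "is_sink P w \<longleftrightarrow> is_source P w" using sinks_eq by blast
    ultimately show ?thesis
      unfolding has_in_arrow_def has_out_arrow_def is_sink_def is_source_def by blast
  qed
  obtain e0 where "e0 \<in> sedges P" using assms(2) by blast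
  moreover have "finite (sedges P)" using oriented by (simp add: is_oriented_signed_graph_def)
  ultimately obtain ws es where cw: "closed_walk P ws es"
    and sat: "\<And>e w. e \<in> sedges P \<Longrightarrow> w \<in> set ws \<Longrightarrow> fst (sends P e) = w \<or> snd (sends P e) = w \<Longrightarrow> e \<in> set es"
    using closed_walk_saturated by blast
  have "has_in_arrow P (set es) w \<and> has_out_arrow P (set es) w" if w: "w \<in> set ws" for w
  proof -
    obtain e where "e \<in> set es" "fst (sends P e) = w \<or> snd (sends P e) = w"
      using closed_walk_vertex_edge[OF cw w] by blast
    then have "has_in_arrow P (sedges P) w" "has_out_arrow P (sedges P) w"
      using in_out closed_walk_edges_subset[OF cw] by blast+
    then show ?thesis
      using sat[OF _ w] unfolding has_in_arrow_def has_out_arrow_def by blast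
  qed
  then have "is_cycle P ws es" using cw by (simp add: is_cycle_def)
  then show False using acyclic by blast
qed

section \<open>The alternating count of level colourings\<close>

lemma sum_sink_source_pairs:
  assumes sp: "signed_poset P"
  shows "(\<Sum>AB\<in>sink_source_pairs P. (-1::int) ^ (card (fst AB) + card (snd AB))) =
         (if sedges P = {} then (-1) ^ card (sverts P) else 0) - 1"
proof -
  let ?X = "{v. is_sink P v}" and ?Y = "{v. is_source P v}"
  have fin: "finite (sverts P)" using signed_poset_finite_verts[OF sp] .
  then have fXY: "finite ?X" "finite ?Y"
    using sinks_subset_verts[of P] sources_subset_verts[of P] by (auto intro: finite_subset)
  have "finite (disjoint_pairs ?X ?Y)"
    by (rule finite_subset[of _ "Pow ?X \<times> Pow ?Y"]) (use fXY in \<open>auto simp: disjoint_pairs_def\<close>)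
  moreover have "({}, {}) \<in> disjoint_pairs ?X ?Y" by (simp add: disjoint_pairs_def)
  moreover have "sink_source_pairs P = disjoint_pairs ?X ?Y - {({}, {})}"
    by (auto simp: sink_source_pairs_def disjoint_pairs_def)
  ultimately have "(\<Sum>AB\<in>sink_source_pairs P. (-1::int) ^ (card (fst AB) + card (snd AB))) =
      (\<Sum>AB\<in>disjoint_pairs ?X ?Y. (-1) ^ (card (fst AB) + card (snd AB))) - 1"
    by (simp add: sum_diff1)
  also have "\<dots> = (if ?X = ?Y then (-1) ^ card ?X else 0) - 1"
    by (simp add: sum_disjoint_pairs[OF fXY])
  also have "\<dots> = (if sedges P = {} then (-1) ^ card (sverts P) else 0) - 1"
  proof (cases "sedges P = {}")
    case True
    then have "?X = sverts P" "?Y = sverts P" by (auto simp: is_sink_def is_source_def)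
    then show ?thesis using True by simp
  qed (use signed_poset_sinks_ne_sources[OF sp] in simp)
  finally show ?thesis .
qed

definition signed_level_count :: "nat \<Rightarrow> sposet \<Rightarrow> int" where
  "signed_level_count N P = (\<Sum>K<N. (-1) ^ (K + card (sverts P)) * int (card (level_colorings K P)))"

lemma signed_level_count_Suc:
  assumes oriented: "is_oriented_signed_graph P"
  shows "signed_level_count (Suc M) P = (-1) ^ card (sverts P) * int (card (level_colorings 0 P))
    - (\<Sum>AB\<in>sink_source_pairs P. (-1) ^ (card (fst AB) + card (snd AB)) *
         signed_level_count M (delete_verts P (fst AB \<union> snd AB)))"
proof -
  let ?n = "card (sverts P)" and ?R = "\<lambda>AB. delete_verts P (fst AB \<union> snd AB)"
  have fin: "finite (sverts P)" using oriented by (simp add: is_oriented_signed_graph_def)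
  have sign: "(-1::int) ^ (Suc K + ?n) =
      - ((-1) ^ (card (fst AB) + card (snd AB)) * (-1) ^ (K + card (sverts (?R AB))))"
    if "AB \<in> sink_source_pairs P" for AB K
  proof -
    have "Suc K + ?n = 1 + (card (fst AB) + card (snd AB)) + (K + card (sverts (?R AB)))"
      using sink_source_pairs_card(1)[OF that fin] by simp
    then show ?thesis by (simp only: power_add) simp
  qed
  have "signed_level_count (Suc M) P = (-1) ^ ?n * int (card (level_colorings 0 P)) +
      (\<Sum>K<M. (-1) ^ (Suc K + ?n) * int (card (level_colorings (Suc K) P)))"
    unfolding signed_level_count_def by (subst sum.lessThan_Suc_shift) simp
  also have "(\<Sum>K<M. (-1) ^ (Suc K + ?n) * int (card (level_colorings (Suc K) P))) =
      (\<Sum>AB\<in>sink_source_pairs P. \<Sum>K<M. (-1) ^ (Suc K + ?n) * int (card (level_colorings K (?R AB))))"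
    using sum_level_colorings_Suc[OF oriented, of "\<lambda>_. 1::int"]
    by (simp add: sum_distrib_left sum.swap[of _ "{..<M}"])
  also have "\<dots> = (\<Sum>AB\<in>sink_source_pairs P. - ((-1) ^ (card (fst AB) + card (snd AB)) *
      signed_level_count M (?R AB)))"
  proof (rule sum.cong[OF refl])
    fix AB assume "AB \<in> sink_source_pairs P"
    then show "(\<Sum>K<M. (-1) ^ (Suc K + ?n) * int (card (level_colorings K (?R AB)))) =
        - ((-1) ^ (card (fst AB) + card (snd AB)) * signed_level_count M (?R AB))"
      unfolding signed_level_count_def sign[OF \<open>AB \<in> sink_source_pairs P\<close>]
      by (simp add: sum_distrib_left sum_negf mult.assoc)
  qed
  finally show ?thesis by (simp add: sum_negf)
qed

text \<open>Induction on the number of vertices via \<open>signed_level_count_Suc\<close>: the pairs of sinks and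
  sources contribute \<open>1\<close> in total, unless \<open>P\<close> has no edges, when the level \<open>0\<close> colouring makes
  up the difference.\<close>

lemma signed_level_count_eq_1:
  assumes "signed_poset P" "card (sverts P) < N"
  shows "signed_level_count N P = 1"
  using assms
proof (induction "card (sverts P)" arbitrary: P N rule: less_induct)
  case less
  have oriented: "is_oriented_signed_graph P" using less.prems(1) by (simp add: signed_poset_def)
  have fin: "finite (sverts P)" using signed_poset_finite_verts[OF less.prems(1)] .
  obtain M where N: "N = Suc M" and M: "card (sverts P) \<le> M" using less.prems(2) by (cases N) auto
  have "signed_level_count M (delete_verts P (fst AB \<union> snd AB)) = 1"
    if "AB \<in> sink_source_pairs P" for AB
    using less.hyps[of "delete_verts P (fst AB \<union> snd AB)" M] sink_source_pairs_card(2)[OF that fin]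
      M signed_poset_delete_verts[OF less.prems(1)] by simp
  then show ?case
    unfolding N signed_level_count_Suc[OF oriented]
    using sum_sink_source_pairs[OF less.prems(1)] card_level_colorings_0[OF oriented] by simp
qed

definition top_weight :: "nat \<Rightarrow> nat \<Rightarrow> nat \<Rightarrow> rat poly" where
  "top_weight K n a = (-1) ^ (K + n + a) * [:-1, 1:] ^ a"

definition top_level_sum :: "nat \<Rightarrow> sposet \<Rightarrow> rat poly" where
  "top_level_sum N P = (\<Sum>K<N. \<Sum>k\<in>level_colorings (Suc K) P.
      if {v \<in> sverts P. k v = - int (Suc K)} = {}
      then top_weight K (card (sverts P)) (card {v \<in> sverts P. k v = int (Suc K)}) else 0)"

lemma sum_level_colorings_Suc_top_weight:
  assumes oriented: "is_oriented_signed_graph P"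
  shows "(\<Sum>k\<in>level_colorings (Suc K) P.
      if {v \<in> sverts P. k v = - int (Suc K)} = {}
      then top_weight K n (card {v \<in> sverts P. k v = int (Suc K)}) else 0) =
    (\<Sum>AB\<in>sink_source_pairs P. if snd AB = {}
      then of_nat (card (level_colorings K (delete_verts P (fst AB \<union> snd AB)))) * top_weight K n (card (fst AB))
      else 0)"
  unfolding sum_level_colorings_Suc[OF oriented]
proof (rule sum.cong[OF refl])
  fix AB assume AB: "AB \<in> sink_source_pairs P"
  then have "(fst AB, snd AB) \<in> sink_source_pairs P" by simp
  note extreme = extend_coloring_extreme_sets[OF this]
  have "(\<Sum>k\<in>level_colorings K (delete_verts P (fst AB \<union> snd AB)).
      if {v \<in> sverts P. extend_coloring (fst AB) (snd AB) (int (Suc K)) k v = - int (Suc K)} = {}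
      then top_weight K n (card {v \<in> sverts P. extend_coloring (fst AB) (snd AB) (int (Suc K)) k v = int (Suc K)})
      else 0) =
    (\<Sum>k\<in>level_colorings K (delete_verts P (fst AB \<union> snd AB)).
      if snd AB = {} then top_weight K n (card (fst AB)) else 0)"
    by (rule sum.cong[OF refl]) (simp only: extreme)
  then show "(\<Sum>k\<in>level_colorings K (delete_verts P (fst AB \<union> snd AB)).
      if {v \<in> sverts P. extend_coloring (fst AB) (snd AB) (int (Suc K)) k v = - int (Suc K)} = {}
      then top_weight K n (card {v \<in> sverts P. extend_coloring (fst AB) (snd AB) (int (Suc K)) k v = int (Suc K)})
      else 0) =
    (if snd AB = {}
      then of_nat (card (level_colorings K (delete_verts P (fst AB \<union> snd AB)))) * top_weight K n (card (fst AB))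
      else 0)"
    by simp
qed

lemma sum_nonempty_Pow_power_card:
  fixes c :: "'a::comm_ring_1"
  assumes "finite X"
  shows "(\<Sum>A\<in>Pow X - {{}}. c ^ card A) = (1 + c) ^ card X - 1"
  using sum_power_card_Pow[OF assms, of c] sum.remove[of "Pow X" "{}" "\<lambda>A. c ^ card A"] assms
  by (simp add: eq_diff_eq add.commute)

text \<open>Deleting the sinks \<open>A\<close> leaves a signed poset whose signed level count is \<open>1\<close>.\<close>

lemma sum_top_weight_sinks:
  assumes sp: "signed_poset P" and AB: "(A, {}) \<in> sink_source_pairs P" and N: "card (sverts P) \<le> N"
  shows "(\<Sum>K<N. of_nat (card (level_colorings K (delete_verts P A))) * top_weight K (card (sverts P)) (card A))
    = [:-1, 1:] ^ card A"
proof -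
  have fin: "finite (sverts P)" using signed_poset_finite_verts[OF sp] .
  let ?m = "card (sverts (delete_verts P A))"
  have "K + card (sverts P) + card A = (K + ?m) + 2 * card A" for K
    using sink_source_pairs_card(1)[OF AB fin] by simp
  then have weight: "top_weight K (card (sverts P)) (card A) = of_int ((-1) ^ (K + ?m)) * [:-1, 1:] ^ card A" for K
    unfolding top_weight_def by (simp only: power_add power_mult) simp
  have "(\<Sum>K<N. of_nat (card (level_colorings K (delete_verts P A))) * top_weight K (card (sverts P)) (card A)) =
      of_int (signed_level_count N (delete_verts P A)) * [:-1, 1:] ^ card A"
    unfolding weight signed_level_count_def by (simp add: sum_distrib_right sum_distrib_left mult_ac)
  moreover have "signed_level_count N (delete_verts P A) = 1"
    using signed_level_count_eq_1[OF signed_poset_delete_verts[OF sp]] sink_source_pairs_card(2)[OF AB fin] N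
    by simp
  ultimately show ?thesis by simp
qed

lemma top_level_sum_eq:
  assumes sp: "signed_poset P" and N: "card (sverts P) \<le> N"
  shows "top_level_sum N P = [:0, 1:] ^ card {v. is_sink P v} - 1"
proof -
  have oriented: "is_oriented_signed_graph P" using sp by (simp add: signed_poset_def)
  have fin: "finite (sverts P)" using signed_poset_finite_verts[OF sp] .
  let ?n = "card (sverts P)" and ?X = "{v. is_sink P v}"
  have "top_level_sum N P = (\<Sum>AB\<in>sink_source_pairs P. \<Sum>K<N. if snd AB = {}
      then of_nat (card (level_colorings K (delete_verts P (fst AB \<union> snd AB)))) * top_weight K ?n (card (fst AB))
      else 0)"
    unfolding top_level_sum_def sum_level_colorings_Suc_top_weight[OF oriented] by (rule sum.swap)
  also have "\<dots> = (\<Sum>AB\<in>sink_source_pairs P. if snd AB = {} then [:-1, 1:] ^ card (fst AB) else 0)"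
    using sum_top_weight_sinks[OF sp _ N] by (intro sum.cong refl) (auto simp: prod_eq_iff)
  also have "\<dots> = (\<Sum>AB\<in>sink_source_pairs P \<inter> {AB. snd AB = {}}. [:-1, 1:] ^ card (fst AB))"
    by (simp add: sum.inter_filter[OF finite_sink_source_pairs[OF fin]] Int_def)
  also have "sink_source_pairs P \<inter> {AB. snd AB = {}} = (\<lambda>A. (A, {})) ` (Pow ?X - {{}})"
    by (auto simp: sink_source_pairs_def image_iff)
  also have "(\<Sum>AB\<in>(\<lambda>A. (A, {})) ` (Pow ?X - {{}}). [:-1, 1:] ^ card (fst AB)) =
      (\<Sum>A\<in>Pow ?X - {{}}. ([:-1, 1:] :: rat poly) ^ card A)"
    by (subst sum.reindex) (auto simp: inj_on_def)
  also have "\<dots> = [:0, 1:] ^ card ?X - 1"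
    using sum_nonempty_Pow_power_card[of ?X "[:-1, 1:] :: rat poly"] fin sinks_subset_verts[of P]
    by (simp add: one_pCons finite_subset)
  finally show ?thesis .
qed

section \<open>The functional\<close>

text \<open>The two summands of \<open>weight\<close> are the ones summed by \<open>signed_level_count\<close> and by
  \<open>top_level_sum\<close>.\<close>

definition max_abs :: "int multiset \<Rightarrow> int" where
  "max_abs m = Max (insert 0 (abs ` set_mset m))"

definition gap_free :: "int multiset \<Rightarrow> bool" where
  "gap_free m \<longleftrightarrow> abs ` set_mset m - {0} = {1..max_abs m}"

definition weight :: "int multiset \<Rightarrow> rat poly" where
  "weight m = (if gap_free m then (-1) ^ (size m + nat (max_abs m)) +
      (if max_abs m \<ge> 1 \<and> count m (- max_abs m) = 0
       then top_weight (nat (max_abs m) - 1) (size m) (count m (max_abs m)) else 0)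
     else 0)"

definition bounded_monomials :: "nat \<Rightarrow> int multiset set" where
  "bounded_monomials D = {m. size m \<le> D \<and> set_mset m \<subseteq> {- int D..int D}}"

definition Phi :: "nat \<Rightarrow> (int multiset \<Rightarrow> rat) \<Rightarrow> rat poly" where
  "Phi D f = (\<Sum>m\<in>bounded_monomials D. smult (f m) (weight m))"

lemma finite_bounded_monomials: "finite (bounded_monomials D)"
proof -
  have "bounded_monomials D = (\<Union>s\<in>{..D}. multisets_of_size {- int D..int D} s)"
    by (auto simp: bounded_monomials_def multisets_of_size_def)
  then show ?thesis by auto
qed

lemma Phi_cong:
  "(\<And>m. m \<in> bounded_monomials D \<Longrightarrow> f m = g m) \<Longrightarrow> Phi D f = Phi D g"
  unfolding Phi_def by (rule sum.cong) simp_all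

lemma Phi_add: "Phi D (\<lambda>m. f m + g m) = Phi D f + Phi D g"
  unfolding Phi_def by (simp add: smult_add_left sum.distrib)

lemma Phi_cmult: "Phi D (\<lambda>m. c * f m) = smult c (Phi D f)"
proof -
  have smult_eq: "smult c p = [:c:] * p" for p :: "rat poly" by simp
  show ?thesis unfolding Phi_def smult_eq by (simp add: sum_distrib_left mult.commute)
qed

lemma Phi_sum: "finite A \<Longrightarrow> Phi D (\<lambda>m. \<Sum>a\<in>A. f a m) = (\<Sum>a\<in>A. Phi D (f a))"
  unfolding Phi_def by (simp add: smult_sum sum.swap[of _ A])

lemma Phi_card_fibres:
  assumes "finite X" "g ` X \<subseteq> bounded_monomials D"
  shows "Phi D (\<lambda>m. of_nat (card {x \<in> X. g x = m})) = (\<Sum>x\<in>X. weight (g x))"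
proof -
  have "Phi D (\<lambda>m. of_nat (card {x \<in> X. g x = m})) =
      (\<Sum>m\<in>bounded_monomials D. \<Sum>x\<in>{x \<in> X. g x = m}. weight (g x))"
    unfolding Phi_def by (intro sum.cong refl) (simp add: of_nat_mult_conv_smult)
  also have "\<dots> = (\<Sum>x\<in>X. weight (g x))"
    by (rule sum.group[OF assms(1) finite_bounded_monomials assms(2)])
  finally show ?thesis .
qed

definition coloring_monomial :: "sposet \<Rightarrow> (nat \<Rightarrow> int) \<Rightarrow> int multiset" where
  "coloring_monomial P k = image_mset k (mset_set (sverts P))"

lemma count_coloring_monomial:
  assumes "finite (sverts P)"
  shows "count (coloring_monomial P k) x = card {v \<in> sverts P. k v = x}"
proof -
  have "count (coloring_monomial P k) x =
      (\<Sum>v | v \<in># mset_set (sverts P) \<and> x = k v. count (mset_set (sverts P)) v)"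
    unfolding coloring_monomial_def by (rule count_image_mset')
  also have "\<dots> = (\<Sum>v \<in> {v \<in> sverts P. k v = x}. 1)"
    using assms by (intro sum.cong) auto
  finally show ?thesis by simp
qed

lemma set_mset_coloring_monomial:
  "finite (sverts P) \<Longrightarrow> set_mset (coloring_monomial P k) = k ` sverts P"
  by (simp add: coloring_monomial_def)

lemma size_coloring_monomial: "size (coloring_monomial P k) = card (sverts P)"
  by (simp add: coloring_monomial_def)

lemma level_colorings_max_abs:
  assumes fin: "finite (sverts P)" and k: "k \<in> level_colorings K P"
  shows "max_abs (coloring_monomial P k) = int K" "gap_free (coloring_monomial P k)"
proof -
  have levels: "abs ` k ` sverts P - {0} = {1..int K}"
    using k by (simp add: level_colorings_def abs_levels_def)
  have "Max (insert 0 (abs ` k ` sverts P)) = int K"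
  proof (rule Max_eqI)
    show "y \<le> int K" if "y \<in> insert 0 (abs ` k ` sverts P)" for y
      using that level_colorings_abs_le[OF k] by auto
    show "int K \<in> insert 0 (abs ` k ` sverts P)"
    proof (cases "K = 0")
      case False
      then have "int K \<in> abs ` k ` sverts P - {0}" unfolding levels by simp
      then show ?thesis by blast
    qed simp
  qed (use fin in simp)
  then show max: "max_abs (coloring_monomial P k) = int K"
    using fin by (simp add: max_abs_def set_mset_coloring_monomial image_image)
  show "gap_free (coloring_monomial P k)"
    unfolding gap_free_def max using levels fin by (simp add: set_mset_coloring_monomial image_image)
qed

lemma gap_free_coloring_monomial:
  assumes fin: "finite (sverts P)" and k: "k \<in> sverts P \<rightarrow>\<^sub>E UNIV" "good_coloring P k"
    and gap_free: "gap_free (coloring_monomial P k)"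
  shows "k \<in> level_colorings (nat (max_abs (coloring_monomial P k))) P"
proof -
  have "max_abs (coloring_monomial P k) \<ge> 0"
    unfolding max_abs_def using fin by (simp add: set_mset_coloring_monomial Max_ge_iff)
  then have "abs_levels P k = {1..int (nat (max_abs (coloring_monomial P k)))}"
    using gap_free fin by (simp add: gap_free_def abs_levels_def set_mset_coloring_monomial image_image)
  then show ?thesis using k by (simp add: level_colorings_def)
qed

lemma level_colorings_disjoint:
  assumes "i \<noteq> j"
  shows "level_colorings i P \<inter> level_colorings j P = {}"
proof -
  have "{1..int i} \<noteq> {1..int j}" using assms by (simp add: Icc_eq_Icc) linarith
  then show ?thesis by (auto simp: level_colorings_def)
qed

lemma weight_level_coloring:
  assumes fin: "finite (sverts P)" and k: "k \<in> level_colorings K P"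
  shows "weight (coloring_monomial P k) = (-1) ^ (card (sverts P) + K) +
     (if K \<ge> 1 \<and> {v \<in> sverts P. k v = - int K} = {}
      then top_weight (K - 1) (card (sverts P)) (card {v \<in> sverts P. k v = int K}) else 0)"
  using level_colorings_max_abs[OF fin k] fin
  by (auto simp: weight_def size_coloring_monomial count_coloring_monomial)

definition bounded_good_colorings :: "nat \<Rightarrow> sposet \<Rightarrow> (nat \<Rightarrow> int) set" where
  "bounded_good_colorings D P = {k \<in> sverts P \<rightarrow>\<^sub>E {- int D..int D}. good_coloring P k}"

lemma finite_bounded_good_colorings:
  "finite (sverts P) \<Longrightarrow> finite (bounded_good_colorings D P)"
  by (rule finite_subset[of _ "sverts P \<rightarrow>\<^sub>E {- int D..int D}"])
    (auto simp: bounded_good_colorings_def intro: finite_PiE)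

lemma Phi_Ycoeff_sum_colorings:
  assumes fin: "finite (sverts P)" and D: "card (sverts P) \<le> D"
  shows "Phi D (Ycoeff P) = (\<Sum>k\<in>bounded_good_colorings D P. weight (coloring_monomial P k))"
proof -
  let ?G = "bounded_good_colorings D P"
  have "Ycoeff P m = of_nat (card {k \<in> ?G. coloring_monomial P k = m})"
    if "m \<in> bounded_monomials D" for m
  proof -
    have "{\<kappa> \<in> sverts P \<rightarrow>\<^sub>E UNIV. proper_col P \<kappa> \<and> preserves P \<kappa> \<and> image_mset \<kappa> (mset_set (sverts P)) = m}
        = {k \<in> ?G. coloring_monomial P k = m}"
      using that fin
      by (auto simp: bounded_good_colorings_def good_coloring_def coloring_monomial_def
          bounded_monomials_def PiE_iff subset_iff)
    then show ?thesis by (simp add: Ycoeff_def)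
  qed
  then have "Phi D (Ycoeff P) = Phi D (\<lambda>m. of_nat (card {k \<in> ?G. coloring_monomial P k = m}))"
    by (rule Phi_cong)
  also have "\<dots> = (\<Sum>k\<in>?G. weight (coloring_monomial P k))"
  proof (rule Phi_card_fibres)
    show "finite ?G" by (rule finite_bounded_good_colorings[OF fin])
    show "coloring_monomial P ` ?G \<subseteq> bounded_monomials D"
      using D fin by (auto simp: bounded_monomials_def bounded_good_colorings_def
          size_coloring_monomial set_mset_coloring_monomial PiE_iff)
  qed
  finally show ?thesis .
qed

text \<open>Only the level colourings have nonzero weight, and for \<open>card (sverts P) \<le> D\<close> they are all
  bounded by \<open>D\<close>.\<close>

lemma sum_bounded_good_colorings_by_level:
  assumes fin: "finite (sverts P)" and D: "card (sverts P) \<le> D"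
  shows "(\<Sum>k\<in>bounded_good_colorings D P. weight (coloring_monomial P k)) =
    (\<Sum>K\<le>card (sverts P). \<Sum>k\<in>level_colorings K P. weight (coloring_monomial P k))"
proof -
  let ?G = "bounded_good_colorings D P" and ?n = "card (sverts P)"
  have sub: "level_colorings K P \<subseteq> ?G" if "K \<le> ?n" for K
    using that D level_colorings_abs_le[of _ K P]
    by (fastforce simp: level_colorings_def bounded_good_colorings_def PiE_iff abs_le_iff)
  have "(\<Sum>k\<in>?G. weight (coloring_monomial P k)) =
      (\<Sum>k\<in>(\<Union>K\<le>?n. level_colorings K P). weight (coloring_monomial P k))"
  proof (rule sum.mono_neutral_right)
    show "finite ?G" by (rule finite_bounded_good_colorings[OF fin])
    show "(\<Union>K\<le>?n. level_colorings K P) \<subseteq> ?G" using sub by blast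
    show "\<forall>k\<in>?G - (\<Union>K\<le>?n. level_colorings K P). weight (coloring_monomial P k) = 0"
    proof (intro ballI)
      fix k assume k: "k \<in> ?G - (\<Union>K\<le>?n. level_colorings K P)"
      show "weight (coloring_monomial P k) = 0"
      proof (cases "gap_free (coloring_monomial P k)")
        case True
        then have "k \<in> level_colorings (nat (max_abs (coloring_monomial P k))) P" (is "k \<in> level_colorings ?K P")
          using k gap_free_coloring_monomial[OF fin] by (auto simp: bounded_good_colorings_def PiE_iff)
        moreover from this have "?K \<le> ?n"
          using level_colorings_empty[OF fin, of ?K] by (metis empty_iff not_le)
        ultimately show ?thesis using k by blast
      qed (simp add: weight_def)
    qed
  qed
  also have "\<dots> = (\<Sum>K\<le>?n. \<Sum>k\<in>level_colorings K P. weight (coloring_monomial P k))"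
    by (rule sum.UNION_disjoint) (auto simp: finite_level_colorings[OF fin] level_colorings_disjoint)
  finally show ?thesis .
qed

lemma Phi_Ycoeff:
  assumes sp: "signed_poset P" and D: "card (sverts P) \<le> D"
  shows "Phi D (Ycoeff P) = monom 1 (nsinks P)"
proof -
  have fin: "finite (sverts P)" using signed_poset_finite_verts[OF sp] .
  let ?n = "card (sverts P)"
  let ?top = "\<lambda>K k. if K \<ge> 1 \<and> {v \<in> sverts P. k v = - int K} = {}
      then top_weight (K - 1) ?n (card {v \<in> sverts P. k v = int K}) else 0"
  have "Phi D (Ycoeff P) = (\<Sum>K<Suc ?n. \<Sum>k\<in>level_colorings K P. (-1) ^ (?n + K) + ?top K k)"
    unfolding Phi_Ycoeff_sum_colorings[OF fin D] sum_bounded_good_colorings_by_level[OF fin D]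
    by (simp add: lessThan_Suc_atMost weight_level_coloring[OF fin] cong: sum.cong)
  also have "\<dots> = of_int (signed_level_count (Suc ?n) P) + (\<Sum>K<Suc ?n. \<Sum>k\<in>level_colorings K P. ?top K k)"
    unfolding signed_level_count_def by (simp add: sum.distrib add.commute mult.commute)
  also have "(\<Sum>K<Suc ?n. \<Sum>k\<in>level_colorings K P. ?top K k) = top_level_sum ?n P"
    unfolding top_level_sum_def by (subst sum.lessThan_Suc_shift) (simp cong: if_cong)
  also have "\<dots> = [:0, 1:] ^ nsinks P - 1"
    using top_level_sum_eq[OF sp] by (simp add: nsinks_def)
  finally show ?thesis
    using signed_level_count_eq_1[OF sp] by (simp add: monom_altdef)
qed

lemma Phi_lincomb_Y:
  assumes "\<forall>(c, P) \<in> set L. signed_poset P \<and> card (sverts P) \<le> D"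
  shows "Phi D (lincomb_Y L) = phi_of L"
  using assms
proof (induction L)
  case Nil
  then show ?case using Phi_cmult[of D 0 "\<lambda>_. 0"] by (simp add: lincomb_Y_def phi_of_def)
next
  case (Cons x L)
  obtain c P where x: "x = (c, P)" by (cases x)
  have "lincomb_Y (x # L) = (\<lambda>m. c * Ycoeff P m + lincomb_Y L m)"
    by (simp add: lincomb_Y_def x)
  then show ?case
    using Cons Phi_Ycoeff[of P D] by (simp add: Phi_add Phi_cmult phi_of_def x)
qed

lemma weight_replicate_mset:
  assumes a: "a \<ge> 1"
  shows "weight (replicate_mset a i) =
    (if i = 0 then (-1) ^ a else if i = 1 then [:-1, 1:] ^ a - (-1) ^ a
     else if i = -1 then - ((-1) ^ a) else 0)"
proof -
  have set: "set_mset (replicate_mset a i) = {i}" using a by simp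
  then have max: "max_abs (replicate_mset a i) = \<bar>i\<bar>" by (simp add: max_abs_def)
  have "{\<bar>i\<bar>} - {0} = {1..\<bar>i\<bar>} \<longleftrightarrow> \<bar>i\<bar> \<le> 1"
  proof
    assume "{\<bar>i\<bar>} - {0} = {1..\<bar>i\<bar>}"
    then have "\<bar>i\<bar> \<ge> 1 \<Longrightarrow> \<bar>i\<bar> = 1" by (metis Diff_iff atLeastAtMost_iff order.refl singletonD)
    then show "\<bar>i\<bar> \<le> 1" by linarith
  next
    assume "\<bar>i\<bar> \<le> 1"
    then have "\<bar>i\<bar> = 0 \<or> \<bar>i\<bar> = 1" by linarith
    then show "{\<bar>i\<bar>} - {0} = {1..\<bar>i\<bar>}" by auto
  qed
  then have gap_free: "gap_free (replicate_mset a i) \<longleftrightarrow> \<bar>i\<bar> \<le> 1"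
    unfolding gap_free_def set max by simp
  consider "i = 0" | "i = 1" | "i = -1" | "\<bar>i\<bar> > 1" by linarith
  then show ?thesis
  proof cases
    case 2
    then show ?thesis using gap_free max a by (simp add: weight_def top_weight_def power_add)
  next
    case 4
    then show ?thesis using gap_free by (auto simp: weight_def)
  qed (use gap_free max a in \<open>simp_all add: weight_def\<close>)
qed

lemma Phi_pab:
  assumes a: "1 \<le> a" "a \<le> D"
  shows "Phi D (pab a 0) = [:-1, 1:] ^ a - (-1) ^ a"
proof -
  let ?I = "{- int D..int D}"
  have "pab a 0 m = of_nat (card {i \<in> ?I. replicate_mset a i = m})"
    if "m \<in> bounded_monomials D" for m
  proof -
    have "{i. m = replicate_mset a i + replicate_mset 0 (- i)} = {i \<in> ?I. replicate_mset a i = m}"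
      using that a by (auto simp: bounded_monomials_def)
    then show ?thesis by (simp add: pab_def)
  qed
  then have "Phi D (pab a 0) = Phi D (\<lambda>m. of_nat (card {i \<in> ?I. replicate_mset a i = m}))"
    by (rule Phi_cong)
  also have "\<dots> = (\<Sum>i\<in>?I. weight (replicate_mset a i))"
    by (rule Phi_card_fibres) (use a in \<open>auto simp: bounded_monomials_def\<close>)
  also have "\<dots> = (\<Sum>i\<in>{-1, 0, 1}. weight (replicate_mset a i))"
    by (rule sum.mono_neutral_right) (use a in \<open>auto simp: weight_replicate_mset\<close>)
  also have "\<dots> = [:-1, 1:] ^ a - (-1) ^ a"
    using a(1) by (simp add: weight_replicate_mset)
  finally show ?thesis .
qed

lemma Phi_xi:
  assumes n: "1 \<le> n" "n \<le> D"
  shows "Phi D (xi n) = monom 1 n"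
proof -
  have "Phi D (xi n) = (\<Sum>a = 1..n. smult (of_nat (n choose a)) (Phi D (pab a 0)))"
    unfolding xi_def by (simp add: Phi_sum Phi_cmult)
  also have "\<dots> = (\<Sum>a = 1..n. of_nat (n choose a) * ([:-1, 1:] ^ a - (-1) ^ a))"
    using n by (intro sum.cong refl) (simp add: Phi_pab of_nat_mult_conv_smult[symmetric])
  also have "\<dots> = (\<Sum>a\<le>n. of_nat (n choose a) * [:-1, 1:] ^ a * 1 ^ (n - a)) -
                 (\<Sum>a\<le>n. of_nat (n choose a) * (-1) ^ a * 1 ^ (n - a))"
    by (simp add: atMost_atLeast0 sum.atLeast_Suc_atMost[of 0 n] right_diff_distrib sum_subtractf)
  also have "\<dots> = ([:-1, 1:] + 1) ^ n - (-1 + 1) ^ n"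
    by (simp only: binomial_ring)
  also have "\<dots> = [:0, 1:] ^ n" using n by (simp add: one_pCons)
  finally show ?thesis by (simp add: monom_altdef)
qed

section \<open>Expanding \<open>\<xi>\<^sub>n\<close> by oriented paths\<close>

text \<open>The edge \<open>j\<close> of \<open>oriented_path a E R\<close> joins \<open>j\<close> and \<open>j + 1\<close> and points towards \<open>j\<close> iff
  \<open>j \<in> R\<close>.\<close>

definition oriented_path :: "nat \<Rightarrow> nat set \<Rightarrow> nat set \<Rightarrow> sposet" where
  "oriented_path a E R = \<lparr>sverts = {..<a}, sedges = E, sends = (\<lambda>j. (j, Suc j)),
     spos = (\<lambda>_. True), sarr = (\<lambda>j. (j \<in> R, j \<notin> R))\<rparr>"

lemma oriented_path_simps [simp]:
  "sverts (oriented_path a E R) = {..<a}" "sedges (oriented_path a E R) = E"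
  "sends (oriented_path a E R) = (\<lambda>j. (j, Suc j))" "spos (oriented_path a E R) = (\<lambda>_. True)"
  "sarr (oriented_path a E R) = (\<lambda>j. (j \<in> R, j \<notin> R))"
  by (simp_all add: oriented_path_def)

definition respects_path :: "nat set \<Rightarrow> nat set \<Rightarrow> (nat \<Rightarrow> int) \<Rightarrow> bool" where
  "respects_path E R k \<longleftrightarrow>
     (\<forall>j\<in>E. (j \<in> R \<longrightarrow> k (Suc j) < k j) \<and> (j \<notin> R \<longrightarrow> k j < k (Suc j)))"

lemma good_coloring_oriented_path: "good_coloring (oriented_path a E R) k \<longleftrightarrow> respects_path E R k"
  unfolding good_coloring_def proper_col_def preserves_def respects_path_def sgnval_def by auto

lemma signed_poset_oriented_path:
  assumes E: "E \<subseteq> {j. Suc j < a}"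
  shows "signed_poset (oriented_path a E R)"
proof -
  have "finite E" using E by (rule finite_subset) (auto intro: finite_subset[of _ "{..<a}"])
  then have oriented: "is_oriented_signed_graph (oriented_path a E R)"
    using E by (auto simp: is_oriented_signed_graph_def)
  have "\<not> is_cycle (oriented_path a E R) ws es" for ws es
  proof
    assume cycle: "is_cycle (oriented_path a E R) ws es"
    then have cw: "closed_walk (oriented_path a E R) ws es" by (simp add: is_cycle_def)
    then have "ws \<noteq> []" by (auto simp: closed_walk_def)
    define M where "M = Max (set ws)"
    have M: "M \<in> set ws" "\<And>w. w \<in> set ws \<Longrightarrow> w \<le> M" using \<open>ws \<noteq> []\<close> by (simp_all add: M_def)
    have ends: "e \<in> set es \<Longrightarrow> Suc e \<in> set ws" for e using closed_walk_edge_ends[OF cw, of e] by simp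
    txt \<open>The largest vertex of the cycle would need an arrow in and an arrow out, but every edge
      at it joins it to the smaller neighbour and so has the same orientation there.\<close>
    obtain e where "e \<in> set es" "(e = M \<and> e \<in> R) \<or> (Suc e = M \<and> e \<notin> R)"
      using cycle M(1) by (auto simp: is_cycle_def has_in_arrow_def)
    moreover obtain e' where "e' \<in> set es" "(e' = M \<and> e' \<notin> R) \<or> (Suc e' = M \<and> e' \<in> R)"
      using cycle M(1) by (auto simp: is_cycle_def has_out_arrow_def)
    ultimately show False using M(2)[OF ends] by fastforce
  qed
  then show ?thesis using oriented by (simp add: signed_poset_def)
qed

text \<open>Inclusion-exclusion \<open>[\<kappa> j = \<kappa> (j + 1)] = 1 - [\<kappa> j > \<kappa> (j + 1)] - [\<kappa> j < \<kappa> (j + 1)]\<close> for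
  each of the edges \<open>j < k\<close>: the triples \<open>(c, E, R)\<close> are the coefficients and oriented paths.\<close>

fun path_expansion :: "nat \<Rightarrow> (rat \<times> nat set \<times> nat set) list" where
  "path_expansion 0 = [(1, {}, {})]"
| "path_expansion (Suc k) = path_expansion k
     @ map (\<lambda>(c, E, R). (- c, insert k E, insert k R)) (path_expansion k)
     @ map (\<lambda>(c, E, R). (- c, insert k E, R)) (path_expansion k)"

lemma path_expansion_subset:
  "(c, E, R) \<in> set (path_expansion k) \<Longrightarrow> E \<subseteq> {..<k} \<and> R \<subseteq> {..<k}"
  by (induction k arbitrary: c E R) fastforce+

lemma sum_list_neg_if_conj:
  fixes f :: "'a \<Rightarrow> rat"
  assumes "\<And>x. x \<in> set xs \<Longrightarrow> P x \<longleftrightarrow> Q x \<and> b"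
  shows "(\<Sum>x\<leftarrow>xs. - (f x * (if P x then 1 else 0))) =
    - (if b then \<Sum>x\<leftarrow>xs. f x * (if Q x then 1 else 0) else 0)"
  using assms by (induction xs) auto

lemma sum_list_path_expansion:
  "(\<Sum>(c, E, R)\<leftarrow>path_expansion k. c * (if respects_path E R \<kappa> then 1 else 0)) =
   (if \<forall>j\<le>k. \<kappa> j = \<kappa> 0 then 1 else 0)"
proof (induction k)
  case 0
  then show ?case by (simp add: respects_path_def)
next
  case (Suc k)
  let ?S = "\<Sum>x\<leftarrow>path_expansion k. fst x * (if respects_path (fst (snd x)) (snd (snd x)) \<kappa> then 1 else 0)"
  have "respects_path (insert k (fst (snd x))) (insert k (snd (snd x))) \<kappa> \<longleftrightarrow>
      respects_path (fst (snd x)) (snd (snd x)) \<kappa> \<and> \<kappa> (Suc k) < \<kappa> k"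
    "respects_path (insert k (fst (snd x))) (snd (snd x)) \<kappa> \<longleftrightarrow>
      respects_path (fst (snd x)) (snd (snd x)) \<kappa> \<and> \<kappa> k < \<kappa> (Suc k)"
    if "x \<in> set (path_expansion k)" for x
    using path_expansion_subset[of "fst x" "fst (snd x)" "snd (snd x)" k] that
    unfolding respects_path_def by auto
  then have "(\<Sum>(c, E, R)\<leftarrow>path_expansion (Suc k). c * (if respects_path E R \<kappa> then 1 else 0)) =
      ?S - (if \<kappa> (Suc k) < \<kappa> k then ?S else 0) - (if \<kappa> k < \<kappa> (Suc k) then ?S else 0)"
    by (simp add: case_prod_unfold comp_def sum_list_neg_if_conj)
  also have "\<dots> = (if \<kappa> (Suc k) = \<kappa> k then ?S else 0)" by auto
  also have "\<dots> = (if \<forall>j\<le>Suc k. \<kappa> j = \<kappa> 0 then 1 else 0)"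
  proof -
    have const: "(\<forall>j\<le>Suc k. \<kappa> j = \<kappa> 0) \<longleftrightarrow> (\<forall>j\<le>k. \<kappa> j = \<kappa> 0) \<and> \<kappa> (Suc k) = \<kappa> k"
      by (metis le_SucI le_Suc_eq order_refl)
    have S: "?S = (if \<forall>j\<le>k. \<kappa> j = \<kappa> 0 then 1 else 0)"
      using Suc.IH by (simp add: case_prod_unfold)
    have if_and: "(if c then (if b then (1::rat) else 0) else 0) = (if b \<and> c then 1 else 0)" for b c
      by simp
    show ?thesis unfolding const S if_and ..
  qed
  finally show ?case .
qed

lemma finite_colorings_with_monomial:
  assumes "finite V"
  shows "finite {\<kappa> \<in> V \<rightarrow>\<^sub>E UNIV. image_mset \<kappa> (mset_set V) = m}"
proof (rule finite_subset[of _ "V \<rightarrow>\<^sub>E set_mset m"])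
  show "{\<kappa> \<in> V \<rightarrow>\<^sub>E UNIV. image_mset \<kappa> (mset_set V) = m} \<subseteq> V \<rightarrow>\<^sub>E set_mset m"
    using assms by (auto simp: PiE_iff extensional_def)
qed (simp add: assms finite_PiE)

lemma card_constant_colorings:
  "card {\<kappa> \<in> {..<Suc k} \<rightarrow>\<^sub>E UNIV. image_mset \<kappa> (mset_set {..<Suc k}) = m \<and> (\<forall>j\<le>k. \<kappa> j = \<kappa> 0)} =
   card {i :: int. m = replicate_mset (Suc k) i}"
proof -
  let ?V = "{..<Suc k}" and ?const = "\<lambda>i. restrict (\<lambda>_. i) {..<Suc k}"
  have image_const: "image_mset (?const i) (mset_set ?V) = replicate_mset (Suc k) i" for i
  proof -
    have "image_mset (?const i) (mset_set ?V) = image_mset (\<lambda>_. i) (mset_set ?V)"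
      by (intro image_mset_cong) auto
    then show ?thesis by (simp add: image_mset_const_eq)
  qed
  have const: "\<kappa> = ?const (\<kappa> 0)" if "\<kappa> \<in> ?V \<rightarrow>\<^sub>E UNIV" "\<forall>j\<le>k. \<kappa> j = \<kappa> 0" for \<kappa> :: "nat \<Rightarrow> int"
  proof
    fix j show "\<kappa> j = ?const (\<kappa> 0) j"
    proof (cases "j < Suc k")
      case True
      then show ?thesis using that(2)[rule_format, of j] by simp
    qed (use that(1) in \<open>simp add: PiE_def extensional_def\<close>)
  qed
  have "{\<kappa> \<in> ?V \<rightarrow>\<^sub>E UNIV. image_mset \<kappa> (mset_set ?V) = m \<and> (\<forall>j\<le>k. \<kappa> j = \<kappa> 0)} =
      ?const ` {i. m = replicate_mset (Suc k) i}"
  proof (intro equalityI subsetI)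
    fix \<kappa> assume "\<kappa> \<in> {\<kappa> \<in> ?V \<rightarrow>\<^sub>E UNIV. image_mset \<kappa> (mset_set ?V) = m \<and> (\<forall>j\<le>k. \<kappa> j = \<kappa> 0)}"
    then have \<kappa>: "\<kappa> \<in> ?V \<rightarrow>\<^sub>E UNIV" "image_mset \<kappa> (mset_set ?V) = m" "\<forall>j\<le>k. \<kappa> j = \<kappa> 0"
      by blast+
    then have "\<kappa> = ?const (\<kappa> 0)" by (intro const)
    moreover from this have "m = replicate_mset (Suc k) (\<kappa> 0)" using \<kappa>(2) image_const by metis
    ultimately show "\<kappa> \<in> ?const ` {i. m = replicate_mset (Suc k) i}" by blast
  qed (auto simp: image_const PiE_iff)
  moreover have "inj_on ?const {i. m = replicate_mset (Suc k) i}"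
    by (rule inj_onI) (metis lessThan_iff restrict_apply' zero_less_Suc)
  ultimately show ?thesis by (simp add: card_image)
qed

lemma sum_list_sum_swap: "(\<Sum>x\<leftarrow>xs. \<Sum>y\<in>A. f x y) = (\<Sum>y\<in>A. \<Sum>x\<leftarrow>xs. f x y)"
  by (induction xs) (simp_all add: sum.distrib)

lemma sum_list_path_expansion_Ycoeff:
  "(\<Sum>(c, E, R)\<leftarrow>path_expansion k. c * Ycoeff (oriented_path (Suc k) E R) m) = pab (Suc k) 0 m"
proof -
  let ?V = "{..<Suc k}"
  let ?A = "{\<kappa> \<in> ?V \<rightarrow>\<^sub>E UNIV. image_mset \<kappa> (mset_set ?V) = m}"
  have finite_A: "finite ?A" by (rule finite_colorings_with_monomial) simp
  have Y: "Ycoeff (oriented_path (Suc k) E R) m = (\<Sum>\<kappa>\<in>?A. if respects_path E R \<kappa> then 1 else 0)" for E R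
  proof -
    have "{\<kappa> \<in> sverts (oriented_path (Suc k) E R) \<rightarrow>\<^sub>E UNIV. proper_col (oriented_path (Suc k) E R) \<kappa> \<and>
        preserves (oriented_path (Suc k) E R) \<kappa> \<and>
        image_mset \<kappa> (mset_set (sverts (oriented_path (Suc k) E R))) = m} = {\<kappa> \<in> ?A. respects_path E R \<kappa>}"
      using good_coloring_oriented_path[of "Suc k" E R] by (auto simp: good_coloring_def)
    then show ?thesis using finite_A by (simp add: Ycoeff_def sum.If_cases Int_def)
  qed
  have "(\<Sum>(c, E, R)\<leftarrow>path_expansion k. c * Ycoeff (oriented_path (Suc k) E R) m) =
      (\<Sum>\<kappa>\<in>?A. \<Sum>(c, E, R)\<leftarrow>path_expansion k. c * (if respects_path E R \<kappa> then 1 else 0))"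
    unfolding Y by (simp add: sum_distrib_left case_prod_unfold sum_list_sum_swap)
  also have "\<dots> = of_nat (card {\<kappa> \<in> ?A. \<forall>j\<le>k. \<kappa> j = \<kappa> 0})"
    using finite_A by (simp add: sum_list_path_expansion sum.If_cases Int_def)
  also have "\<dots> = pab (Suc k) 0 m"
    using card_constant_colorings[of k m] by (simp add: pab_def conj_assoc)
  finally show ?thesis .
qed

definition xi_expansion :: "nat \<Rightarrow> (rat \<times> sposet) list" where
  "xi_expansion n = concat (map (\<lambda>k. map (\<lambda>(c, E, R). (of_nat (n choose Suc k) * c, oriented_path (Suc k) E R))
       (path_expansion k)) [0..<n])"

lemma signed_poset_xi_expansion: "\<forall>(c, P) \<in> set (xi_expansion n). signed_poset P"
  using path_expansion_subset
  by (fastforce simp: xi_expansion_def intro!: signed_poset_oriented_path)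

lemma lincomb_Y_concat: "lincomb_Y (concat Ls) m = (\<Sum>L\<leftarrow>Ls. lincomb_Y L m)"
  by (induction Ls) (simp_all add: lincomb_Y_def)

lemma lincomb_Y_xi_expansion: "lincomb_Y (xi_expansion n) = xi n"
proof
  fix m
  have "lincomb_Y (xi_expansion n) m = (\<Sum>k\<leftarrow>[0..<n]. of_nat (n choose Suc k) *
      (\<Sum>(c, E, R)\<leftarrow>path_expansion k. c * Ycoeff (oriented_path (Suc k) E R) m))"
    unfolding xi_expansion_def lincomb_Y_concat
    by (simp add: lincomb_Y_def comp_def case_prod_unfold mult.assoc sum_list_const_mult)
  also have "\<dots> = (\<Sum>k<n. of_nat (n choose Suc k) * pab (Suc k) 0 m)"
    by (simp add: sum_list_path_expansion_Ycoeff atLeast0LessThan flip: sum_set_upt_conv_sum_list_nat)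
  also have "\<dots> = xi n m"
    unfolding xi_def by (rule sum_bounds_lt_plus1)
  finally show "lincomb_Y (xi_expansion n) m = xi n m" .
qed

theorem lemma6p12:
  fixes n :: nat
  assumes "n \<ge> 1"
  shows "(\<exists>L. (\<forall>(c, P) \<in> set L. signed_poset P) \<and> lincomb_Y L = xi n) \<and>
         (\<forall>L. (\<forall>(c, P) \<in> set L. signed_poset P) \<and> lincomb_Y L = xi n
               \<longrightarrow> phi_of L = monom 1 n)"
proof (intro conjI allI impI)
  show "\<exists>L. (\<forall>(c, P) \<in> set L. signed_poset P) \<and> lincomb_Y L = xi n"
    using signed_poset_xi_expansion lincomb_Y_xi_expansion by blast
next
  fix L assume L: "(\<forall>(c, P) \<in> set L. signed_poset P) \<and> lincomb_Y L = xi n"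
  define D where "D = n + (\<Sum>(c, P)\<leftarrow>L. card (sverts P))"
  have "\<forall>(c, P) \<in> set L. signed_poset P \<and> card (sverts P) \<le> D"
    using L member_le_sum_list[of _ "map (\<lambda>(c, P). card (sverts P)) L"]
    by (fastforce simp: D_def)
  then have "phi_of L = Phi D (lincomb_Y L)" by (simp add: Phi_lincomb_Y)
  also have "\<dots> = monom 1 n" using L assms by (simp add: Phi_xi D_def)
  finally show "phi_of L = monom 1 n" .
qed

end
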